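(* Let $n\ge 3$ and $k\ge 3$. For every $\alpha\in\mathbf{A}_k(n)\setminus\{r_{n,k}\}$, at least one of $\mathrm{LastNonMax}(\alpha)$, $\mathrm{LastSymbol}(\alpha)$, $\mathrm{FirstNonMin}(\alpha)$, $\mathrm{SecondLastNonMax}(\alpha)$ lies in $\mathbf{A}_k(n)$, so $\mathrm{Par}(\alpha)\in\mathbf{A}_k(n)$ is well defined. Moreover, for every $\alpha\in\mathbf{A}_k(n)$ there is $t\ge 0$ with $\mathrm{Par}^t(\alpha)=r_{n,k}$. Consequently the relation $\alpha\mapsto\mathrm{Par}(\alpha)$ defines a rooted tree with vertex set $\mathbf{A}_k(n)$ and root $r_{n,k}$, in which each non-root $\alpha$ and its parent $\mathrm{Par}(\alpha)$ have rotations that differ in exactly one (first) position.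
   Context: Let $\Sigma=\{0,1,\dots,k-1\}$. Strings are compared lexicographically ($\alpha<\beta$ if $\alpha$ is a proper prefix of $\beta$, or $\alpha$ has the smaller symbol at the first index where they differ). For $\alpha=a_1\cdots a_n$, $\alpha^R=a_n\cdots a_1$; $[\alpha]$ is the set of rotations of $\alpha$. $\alpha$ is a necklace if it is the lexicographically smallest element of $[\alpha]$; a bracelet if it is the lexicographically smallest element of $[\alpha]\cup[\alpha^R]$. A necklace $\alpha$ is symmetric if $\alpha^R\in[\alpha]$, asymmetric otherwise. $\mathbf{A}_k(n)$ is the set of asymmetric bracelets of length $n$ over $\Sigma$. $r_{n,k}=0^{n-2}(k-2)(k-1)$. Operations on $\alpha=a_1\cdots a_n$: $\mathrm{LastNonMax}(\alpha)=a_1\cdots a_{j-1}(a_j+1)(k-1)^{n-j}$, where $j$ is the index of the last symbol different from $k-1$; $\mathrm{LastSymbol}(\alpha)$ is the necklace (smallest rotation) of $a_1\cdots a_{n-1}((a_n+1)\bmod k)$; $\mathrm{FirstNonMin}(\alpha)=0^{i-1}(a_i-1)a_{i+1}\cdots a_n$, where $i$ is the index of the first nonzero symbol; $\mathrm{SecondLastNonMax}(\alpha)=a_1\cdots a_{\ell-1}(a_\ell+1)a_{\ell+1}\cdots a_n$, where $\ell$ is the index of the second-last symbol different from $k-1$. Parent rule: for $\alpha\in\mathbf{A}_k(n)\setminus\{r_{n,k}\}$, $\mathrm{Par}(\alpha)$ is the first string in the list $\langle \mathrm{LastNonMax}(\alpha),\mathrm{LastSymbol}(\alpha),\mathrm{FirstNonMin}(\alpha),\mathrm{SecondLastNonMax}(\alpha)\rangle$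 that belongs to $\mathbf{A}_k(n)$. $\mathrm{Par}^t$ denotes $t$-fold iteration, $\mathrm{Par}^0(\alpha)=\alpha$. *)

theory Defs
  imports Main "HOL-Library.List_Lexorder"
begin

text \<open>Strings over \<Sigma> = {0,...,k-1} are lists of naturals; positions are 0-based.
  The order on lists (from List_Lexorder) is lexicographic, with a proper prefix
  being smaller.\<close>

definition strings :: "nat \<Rightarrow> nat \<Rightarrow> nat list set" where
  "strings k n = {xs. length xs = n \<and> set xs \<subseteq> {..<k}}"

definition rotations :: "nat list \<Rightarrow> nat list set" where
  "rotations xs = {rotate i xs | i. i < length xs} \<union> {xs}"

definition is_necklace :: "nat list \<Rightarrow> bool" where
  "is_necklace xs \<longleftrightarrow> (\<forall>ys \<in> rotations xs. xs \<le> ys)"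

definition is_bracelet :: "nat list \<Rightarrow> bool" where
  "is_bracelet xs \<longleftrightarrow> (\<forall>ys \<in> rotations xs \<union> rotations (rev xs). xs \<le> ys)"

definition symmetric_necklace :: "nat list \<Rightarrow> bool" where
  "symmetric_necklace xs \<longleftrightarrow> is_necklace xs \<and> rev xs \<in> rotations xs"

definition asym_bracelets :: "nat \<Rightarrow> nat \<Rightarrow> nat list set" where
  "asym_bracelets k n =
     {xs \<in> strings k n. is_bracelet xs \<and> is_necklace xs \<and> \<not> symmetric_necklace xs}"

definition root_string :: "nat \<Rightarrow> nat \<Rightarrow> nat list" where
  "root_string n k = replicate (n - 2) 0 @ [k - 2, k - 1]"

definition necklace_of :: "nat list \<Rightarrow> nat list" where
  "necklace_of xs = Min (rotations xs)"

definition nonmax_idx :: "nat \<Rightarrow> nat list \<Rightarrow> nat set" where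
  "nonmax_idx k xs = {j. j < length xs \<and> xs ! j \<noteq> k - 1}"

definition last_non_max :: "nat \<Rightarrow> nat list \<Rightarrow> nat list option" where
  "last_non_max k xs =
     (if nonmax_idx k xs = {} then None
      else let j = Max (nonmax_idx k xs) in
        Some (take j xs @ [xs ! j + 1] @ replicate (length xs - j - 1) (k - 1)))"

definition last_symbol :: "nat \<Rightarrow> nat list \<Rightarrow> nat list" where
  "last_symbol k xs = necklace_of (butlast xs @ [(last xs + 1) mod k])"

definition first_non_min :: "nat list \<Rightarrow> nat list option" where
  "first_non_min xs =
     (if {i. i < length xs \<and> xs ! i \<noteq> 0} = {} then None
      else let i = Min {i. i < length xs \<and> xs ! i \<noteq> 0} in
        Some (replicate i 0 @ [xs ! i - 1] @ drop (Suc i) xs))"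

definition second_last_non_max :: "nat \<Rightarrow> nat list \<Rightarrow> nat list option" where
  "second_last_non_max k xs =
     (if card (nonmax_idx k xs) < 2 then None
      else let l = Max (nonmax_idx k xs - {Max (nonmax_idx k xs)}) in
        Some (xs[l := xs ! l + 1]))"

definition par_candidates :: "nat \<Rightarrow> nat list \<Rightarrow> nat list option list" where
  "par_candidates k xs =
     [last_non_max k xs, Some (last_symbol k xs), first_non_min xs, second_last_non_max k xs]"

definition in_set_opt :: "nat list set \<Rightarrow> nat list option \<Rightarrow> bool" where
  "in_set_opt A o' \<longleftrightarrow> (case o' of Some b \<Rightarrow> b \<in> A | None \<Rightarrow> False)"

definition par :: "nat \<Rightarrow> nat \<Rightarrow> nat list \<Rightarrow> nat list" where
  "par k n xs =
     (case find (in_set_opt (asym_bracelets k n)) (par_candidates k xs) of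
        Some (Some b) \<Rightarrow> b
      | _ \<Rightarrow> xs)"

end

theory Submission
  imports Defs
begin

text \<open>A string lies in A_k(n) iff it is weakly below each of its rotations and strictly below
  each rotation of its reversal. Every candidate parent changes a single symbol of \<alpha>
  (LastSymbol up to rotation), and changing one symbol changes each rotation at one known
  position, so most of these comparisons carry over from \<alpha>; the remaining ones are checked
  case by case, in the order in which Par tries the candidates. For termination, each Par step
  strictly increases the number of leading zeros, then the weight of the first nonzero symbol,
  then the string itself, lexicographically; as A_k(n) is finite, iterating Par ends at the root.\<close>

section \<open>Lexicographic order on lists\<close>

lemma append_less_append_iff:
  fixes a b x y :: "'a::linorder list"
  assumes "length a = length b"
  shows "(a @ x < b @ y) \<longleftrightarrow> (a < b \<or> (a = b \<and> x < y))"
  using assms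
proof (induction a arbitrary: b)
  case Nil then show ?case by simp
next
  case (Cons h a)
  then obtain g b' where b: "b = g # b'" by (cases b) auto
  with Cons show ?case by auto
qed

lemma append_le_append_iff:
  fixes a b x y :: "'a::linorder list"
  assumes "length a = length b"
  shows "(a @ x \<le> b @ y) \<longleftrightarrow> (a < b \<or> (a = b \<and> x \<le> y))"
  using append_less_append_iff[OF assms, of x y] assms
  by (auto simp: order_le_less)

lemma append_less_appendI: "length a = length b \<Longrightarrow> (a::'a::linorder list) < b \<Longrightarrow> a @ x < b @ y"
  using append_less_append_iff by blast

lemma same_append_less_iff: "(a @ (x::'a::linorder list) < a @ y) \<longleftrightarrow> x < y"
  using append_less_append_iff[of a a x y] by auto

lemma append_less_appendD:
  fixes a b x y :: "'a::linorder list"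
  assumes "length a = length b" "a @ x < b @ y"
  shows "a \<le> b"
  using append_less_append_iff[OF assms(1)] assms(2) by auto

lemma hd_less_imp_less: "xs \<noteq> [] \<Longrightarrow> ys \<noteq> [] \<Longrightarrow> hd xs < hd ys \<Longrightarrow> (xs::'a::linorder list) < ys"
  by (cases xs; cases ys) auto


lemma append_less_append_transfer:
  fixes y y' a b a' b' :: "'a::linorder list"
  assumes "length y = length y'" "y @ a < y' @ b" "y = y' \<Longrightarrow> a' < b'"
  shows "y @ a' < y' @ b'"
  using append_less_append_iff[OF assms(1)] assms(2,3) by blast

lemma replicate_zero_le: "length ys = m \<Longrightarrow> replicate m (0::nat) \<le> ys"
proof (induction m arbitrary: ys)
  case 0 then show ?case by simp
next
  case (Suc m) then show ?case by (cases ys) auto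
qed

lemma replicate_zero_append_less:
  fixes ys xs :: "nat list"
  assumes "length ys = m + length xs" "take m ys \<noteq> replicate m 0"
  shows "replicate m 0 @ xs < ys"
proof -
  have ys: "ys = take m ys @ drop m ys" by simp
  have l: "length (take m ys) = m" using assms(1) by simp
  have "replicate m 0 \<le> take m ys" using replicate_zero_le[of "take m ys" m] l by simp
  then have "replicate m 0 < take m ys" using assms(2) by (simp add: order_le_less)
  then show ?thesis using append_less_appendI[of "replicate m 0" "take m ys" xs "drop m ys"] l
    by (metis length_replicate ys)
qed

lemma take_neq_replicate_zero: "j < m \<Longrightarrow> j < length xs \<Longrightarrow> xs ! j \<noteq> (0::nat) \<Longrightarrow> take m xs \<noteq> replicate m 0"
  by (metis nth_replicate nth_take)


lemma take_replicate_zero_if_le: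
  fixes xs ys :: "nat list"
  assumes "xs \<le> ys" "length xs = length ys" "take m ys = replicate m 0" "m \<le> length ys"
  shows "take m xs = replicate m 0"
proof (rule ccontr)
  assume "take m xs \<noteq> replicate m 0"
  moreover have "ys = replicate m 0 @ drop m ys" using assms(3)
    by (metis append_take_drop_id)
  ultimately have "ys < xs" using replicate_zero_append_less[of xs m "drop m ys"] assms by simp
  then show False using assms(1) by simp
qed

section \<open>Rotations and membership in A_k(n)\<close>

lemma rotations_appendI: "xs = u @ w \<Longrightarrow> w @ u \<in> rotations xs"
proof (cases "w = []")
  case True assume "xs = u @ w" then show ?thesis using True by (simp add: rotations_def)
next
  case False
  assume xs: "xs = u @ w"
  then have lt: "length u < length xs" using False by simp
  moreover have "rotate (length u) xs = w @ u" using xs lt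
    by (simp add: rotate_drop_take)
  ultimately have "w @ u \<in> {rotate i xs |i. i < length xs}" by (metis (mono_tags, lifting) mem_Collect_eq)
  then show ?thesis by (simp add: rotations_def)
qed

lemma rotations_conv_append: "rotations xs = {w @ u | u w. xs = u @ w}"
proof (rule set_eqI, rule iffI)
  fix ys assume "ys \<in> rotations xs"
  then consider i where "i < length xs" "ys = rotate i xs" | "ys = xs"
    unfolding rotations_def by blast
  then have "\<exists>u w. ys = w @ u \<and> xs = u @ w"
  proof cases
    case 1
    then have "ys = drop i xs @ take i xs" by (simp add: rotate_drop_take)
    then show ?thesis by (metis append_take_drop_id)
  next
    case 2 then show ?thesis by auto
  qed
  then show "ys \<in> {w @ u | u w. xs = u @ w}" by blast
next
  fix ys assume "ys \<in> {w @ u | u w. xs = u @ w}"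
  then show "ys \<in> rotations xs" using rotations_appendI by blast
qed

lemma rotationsE: "ys \<in> rotations xs \<Longrightarrow> (\<And>u w. xs = u @ w \<Longrightarrow> ys = w @ u \<Longrightarrow> P) \<Longrightarrow> P"
  by (auto simp: rotations_conv_append)

lemma self_in_rotations: "xs \<in> rotations xs"
  by (simp add: rotations_def)

lemma length_rotations: "ys \<in> rotations xs \<Longrightarrow> length ys = length xs"
  by (auto simp: rotations_conv_append)

lemma finite_rotations: "finite (rotations xs)"
  by (simp add: rotations_def)

lemma rotations_rev: "rotations (rev xs) = rev ` rotations xs"
proof (rule set_eqI, rule iffI)
  fix ys assume "ys \<in> rotations (rev xs)"
  then obtain u w where uw: "rev xs = u @ w" "ys = w @ u" by (rule rotationsE)
  have "xs = rev w @ rev u" using uw(1) by (metis rev_append rev_rev_ident)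
  then have "rev u @ rev w \<in> rotations xs" by (rule rotations_appendI)
  moreover have "ys = rev (rev u @ rev w)" using uw(2) by simp
  ultimately show "ys \<in> rev ` rotations xs" by (rule rev_image_eqI)
next
  fix ys assume "ys \<in> rev ` rotations xs"
  then obtain zs where zs: "zs \<in> rotations xs" "ys = rev zs" by blast
  then obtain u w where uw: "xs = u @ w" "zs = w @ u" by (metis rotationsE)
  have "rev xs = rev w @ rev u" using uw by simp
  then have "rev u @ rev w \<in> rotations (rev xs)" by (rule rotations_appendI)
  then show "ys \<in> rotations (rev xs)" using zs uw by simp
qed

lemma rotations_subset: "ys \<in> rotations xs \<Longrightarrow> rotations ys \<subseteq> rotations xs"
proof
  fix zs assume "ys \<in> rotations xs" "zs \<in> rotations ys"
  then obtain u w u' w' where xs: "xs = u @ w" "ys = w @ u" and ys: "ys = u' @ w'" "zs = w' @ u'"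
    by (metis rotationsE)
  have "w @ u = u' @ w'" using xs ys by simp
  then obtain us where "(w = u' @ us \<and> us @ u = w') \<or> (w @ us = u' \<and> u = us @ w')"
    unfolding append_eq_append_conv2 by blast
  then show "zs \<in> rotations xs"
  proof
    assume a: "w = u' @ us \<and> us @ u = w'"
    then have "xs = (u @ u') @ us" "zs = us @ (u @ u')" using xs ys by auto
    then show ?thesis using rotations_appendI by blast
  next
    assume a: "w @ us = u' \<and> u = us @ w'"
    then have "xs = us @ (w' @ w)" "zs = (w' @ w) @ us" using xs ys by auto
    then show ?thesis using rotations_appendI by blast
  qed
qed

lemma rotations_sym: "ys \<in> rotations xs \<Longrightarrow> xs \<in> rotations ys"
  by (metis rotationsE rotations_appendI)

lemma rotations_eq: "ys \<in> rotations xs \<Longrightarrow> rotations ys = rotations xs"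
  using rotations_subset rotations_sym by blast

lemma asym_bracelets_iff_append:
  "xs \<in> asym_bracelets k n \<longleftrightarrow> xs \<in> strings k n \<and> (\<forall>u w. xs = u @ w \<longrightarrow> xs \<le> w @ u)
     \<and> (\<forall>u w. xs = u @ w \<longrightarrow> xs < rev u @ rev w)"
proof -
  have neck: "is_necklace xs \<longleftrightarrow> (\<forall>u w. xs = u @ w \<longrightarrow> xs \<le> w @ u)"
    unfolding is_necklace_def rotations_conv_append by blast
  have revrot: "rotations (rev xs) = {rev u @ rev w | u w. xs = u @ w}"
  proof -
    have "rotations (rev xs) = rev ` {w @ u | u w. xs = u @ w}"
      using rotations_rev[of xs] rotations_conv_append[of xs] by simp
    also have "... = {rev u @ rev w | u w. xs = u @ w}"
    proof (rule set_eqI, rule iffI)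
      fix x assume "x \<in> rev ` {w @ u | u w. xs = u @ w}"
      then obtain u w where "xs = u @ w" "x = rev (w @ u)" by blast
      then have "xs = u @ w \<and> x = rev u @ rev w" by simp
      then show "x \<in> {rev u @ rev w | u w. xs = u @ w}" by blast
    next
      fix x assume "x \<in> {rev u @ rev w | u w. xs = u @ w}"
      then obtain u w where "xs = u @ w" "x = rev (w @ u)" by auto
      then show "x \<in> rev ` {w @ u | u w. xs = u @ w}" by blast
    qed
    finally show ?thesis .
  qed
  have sym: "rev xs \<in> rotations xs \<longleftrightarrow> xs \<in> rotations (rev xs)"
    by (metis image_eqI rev_rev_ident rotations_rev rotations_sym)
  have br: "is_bracelet xs \<longleftrightarrow> is_necklace xs \<and> (\<forall>ys \<in> rotations (rev xs). xs \<le> ys)"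
    unfolding is_bracelet_def is_necklace_def by blast
  have "(\<forall>ys \<in> rotations (rev xs). xs \<le> ys) \<and> xs \<notin> rotations (rev xs) \<longleftrightarrow>
        (\<forall>ys \<in> rotations (rev xs). xs < ys)"
    by (metis order_le_less order_less_irrefl)
  moreover have "(\<forall>ys \<in> rotations (rev xs). xs < ys) \<longleftrightarrow> (\<forall>u w. xs = u @ w \<longrightarrow> xs < rev u @ rev w)"
    unfolding revrot by blast
  ultimately show ?thesis
    unfolding asym_bracelets_def symmetric_necklace_def mem_Collect_eq br neck sym
    by blast
qed

definition rot_at :: "nat \<Rightarrow> nat list \<Rightarrow> nat list" where
  "rot_at i xs = drop i xs @ take i xs"

definition rev_rot_at :: "nat \<Rightarrow> nat list \<Rightarrow> nat list" where
  "rev_rot_at i xs = rev (take i xs) @ rev (drop i xs)"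

lemma rot_at_0[simp]: "rot_at 0 xs = xs" by (simp add: rot_at_def)

lemma asym_bracelets_iff_rot_at:
  "xs \<in> asym_bracelets k n \<longleftrightarrow> xs \<in> strings k n \<and> (\<forall>i \<le> length xs. xs \<le> rot_at i xs)
     \<and> (\<forall>i \<le> length xs. xs < rev_rot_at i xs)"
proof -
  have 1: "(\<forall>u w. xs = u @ w \<longrightarrow> xs \<le> w @ u) \<longleftrightarrow> (\<forall>i \<le> length xs. xs \<le> rot_at i xs)"
  proof
    assume H: "\<forall>u w. xs = u @ w \<longrightarrow> xs \<le> w @ u"
    show "\<forall>i \<le> length xs. xs \<le> rot_at i xs"
      unfolding rot_at_def using H by (metis append_take_drop_id)
  next
    assume H: "\<forall>i \<le> length xs. xs \<le> rot_at i xs"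
    show "\<forall>u w. xs = u @ w \<longrightarrow> xs \<le> w @ u"
    proof (intro allI impI)
      fix u w assume "xs = u @ w"
      then have "u = take (length u) xs" "w = drop (length u) xs" "length u \<le> length xs" by simp_all
      then show "xs \<le> w @ u" using H unfolding rot_at_def by metis
    qed
  qed
  have 2: "(\<forall>u w. xs = u @ w \<longrightarrow> xs < rev u @ rev w) \<longleftrightarrow> (\<forall>i \<le> length xs. xs < rev_rot_at i xs)"
  proof
    assume H: "\<forall>u w. xs = u @ w \<longrightarrow> xs < rev u @ rev w"
    show "\<forall>i \<le> length xs. xs < rev_rot_at i xs"
      unfolding rev_rot_at_def using H by (metis append_take_drop_id)
  next
    assume H: "\<forall>i \<le> length xs. xs < rev_rot_at i xs"
    show "\<forall>u w. xs = u @ w \<longrightarrow> xs < rev u @ rev w"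
    proof (intro allI impI)
      fix u w assume "xs = u @ w"
      then have "u = take (length u) xs" "w = drop (length u) xs" "length u \<le> length xs" by simp_all
      then show "xs < rev u @ rev w" using H unfolding rev_rot_at_def by metis
    qed
  qed
  show ?thesis unfolding asym_bracelets_iff_append 1 2 ..
qed

lemma asym_bracelet_le_rot_at: "xs \<in> asym_bracelets k n \<Longrightarrow> i \<le> length xs \<Longrightarrow> xs \<le> rot_at i xs"
  using asym_bracelets_iff_rot_at by blast

lemma asym_bracelet_less_rev_rot_at: "xs \<in> asym_bracelets k n \<Longrightarrow> i \<le> length xs \<Longrightarrow> xs < rev_rot_at i xs"
  using asym_bracelets_iff_rot_at by blast

lemma asym_bracelets_strings: "xs \<in> asym_bracelets k n \<Longrightarrow> xs \<in> strings k n"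
  using asym_bracelets_iff_rot_at by blast

lemma strings_iff: "xs \<in> strings k n \<longleftrightarrow> length xs = n \<and> (\<forall>x \<in> set xs. x < k)"
  unfolding strings_def by auto


section \<open>Changing a single symbol\<close>

lemma Suc_shared_less:
  fixes P Q R T :: "nat list"
  assumes "length P \<ge> length R" "P @ e # Q < R @ e # T"
  shows "P @ Suc e # Q < R @ Suc e # T"
proof -
  define P1 where "P1 = take (length R) P"
  define P2 where "P2 = drop (length R) P"
  have P: "P = P1 @ P2" and l: "length P1 = length R" using assms(1) by (simp_all add: P1_def P2_def)
  have "P1 @ (P2 @ e # Q) < R @ (e # T)" using assms(2) P by simp
  then have c: "P1 < R \<or> (P1 = R \<and> P2 @ e # Q < e # T)" using append_less_append_iff[OF l] by blast
  show ?thesis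
  proof (cases "P1 < R")
    case True
    then have "P1 @ (P2 @ Suc e # Q) < R @ (Suc e # T)" using append_less_appendI[OF l] by blast
    then show ?thesis using P by simp
  next
    case False
    then have eq: "P1 = R" and lt: "P2 @ e # Q < e # T" using c by auto
    have "P2 @ Suc e # Q < Suc e # T"
    proof (cases P2)
      case Nil then show ?thesis using lt by simp
    next
      case (Cons h P2')
      then have "h \<le> e" using lt by auto
      then show ?thesis using Cons by simp
    qed
    then show ?thesis using P eq by (simp add: same_append_less_iff)
  qed
qed

lemma Suc_shared_le_less:
  fixes P Q R T :: "nat list"
  assumes "length P > length R" "P @ e # Q \<le> R @ e # T"
  shows "P @ Suc e # Q < R @ Suc e # T"
proof -
  define P1 where "P1 = take (length R) P"
  define P2 where "P2 = drop (length R) P"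
  have P: "P = P1 @ P2" and l: "length P1 = length R" using assms(1) by (simp_all add: P1_def P2_def)
  have ne: "P2 \<noteq> []" using assms(1) by (simp add: P2_def)
  have "P1 @ (P2 @ e # Q) \<le> R @ (e # T)" using assms(2) P by simp
  then have c: "P1 < R \<or> (P1 = R \<and> P2 @ e # Q \<le> e # T)" using append_le_append_iff[OF l] by blast
  show ?thesis
  proof (cases "P1 < R")
    case True
    then have "P1 @ (P2 @ Suc e # Q) < R @ (Suc e # T)" using append_less_appendI[OF l] by blast
    then show ?thesis using P by simp
  next
    case False
    then have eq: "P1 = R" and lt: "P2 @ e # Q \<le> e # T" using c by auto
    obtain h P2' where "P2 = h # P2'" using ne by (cases P2) auto
    then have "h \<le> e" using lt by auto
    then have "P2 @ Suc e # Q < Suc e # T" using \<open>P2 = h # P2'\<close> by simp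
    then show ?thesis using P eq by (simp add: same_append_less_iff)
  qed
qed

lemma pred_shared_less:
  fixes P Q R T :: "nat list"
  assumes "length R \<ge> length P" "P @ Suc e # Q < R @ Suc e # T"
  shows "P @ e # Q < R @ e # T"
proof -
  define R1 where "R1 = take (length P) R"
  define R2 where "R2 = drop (length P) R"
  have R: "R = R1 @ R2" and l: "length P = length R1" using assms(1) by (simp_all add: R1_def R2_def)
  have "P @ (Suc e # Q) < R1 @ (R2 @ Suc e # T)" using assms(2) R by simp
  then have c: "P < R1 \<or> (P = R1 \<and> Suc e # Q < R2 @ Suc e # T)" using append_less_append_iff[OF l] by blast
  show ?thesis
  proof (cases "P < R1")
    case True
    then have "P @ (e # Q) < R1 @ (R2 @ e # T)" using append_less_appendI[OF l] by blast
    then show ?thesis using R by simp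
  next
    case False
    then have eq: "P = R1" and lt: "Suc e # Q < R2 @ Suc e # T" using c by auto
    have "e # Q < R2 @ e # T"
    proof (cases R2)
      case Nil then show ?thesis using lt by simp
    next
      case (Cons h R2')
      then have "Suc e \<le> h" using lt by auto
      then show ?thesis using Cons by simp
    qed
    then show ?thesis using R eq by (simp add: same_append_less_iff)
  qed
qed

lemma pred_shared_le_less:
  fixes P Q R T :: "nat list"
  assumes "length R > length P" "P @ Suc e # Q \<le> R @ Suc e # T"
  shows "P @ e # Q < R @ e # T"
proof -
  define R1 where "R1 = take (length P) R"
  define R2 where "R2 = drop (length P) R"
  have R: "R = R1 @ R2" and l: "length P = length R1" using assms(1) by (simp_all add: R1_def R2_def)
  have ne: "R2 \<noteq> []" using assms(1) by (simp add: R2_def)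
  have "P @ (Suc e # Q) \<le> R1 @ (R2 @ Suc e # T)" using assms(2) R by simp
  then have c: "P < R1 \<or> (P = R1 \<and> Suc e # Q \<le> R2 @ Suc e # T)" using append_le_append_iff[OF l] by blast
  show ?thesis
  proof (cases "P < R1")
    case True
    then have "P @ (e # Q) < R1 @ (R2 @ e # T)" using append_less_appendI[OF l] by blast
    then show ?thesis using R by simp
  next
    case False
    then have eq: "P = R1" and lt: "Suc e # Q \<le> R2 @ Suc e # T" using c by auto
    obtain h R2' where "R2 = h # R2'" using ne by (cases R2) auto
    then have "Suc e \<le> h" using lt by auto
    then have "e # Q < R2 @ e # T" using \<open>R2 = h # R2'\<close> by simp
    then show ?thesis using R eq by (simp add: same_append_less_iff)
  qed
qed

lemma rot_at_append_Cons:
  fixes P Q :: "nat list"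
  assumes "i \<le> length P + length Q + 1"
  shows "\<exists>R T. (\<forall>x. rot_at i (P @ x # Q) = R @ x # T) \<and>
     length R = (if i \<le> length P then length P - i else length P + length Q + 1 - i + length P)"
proof (cases "i \<le> length P")
  case True
  show ?thesis using True
    by (intro exI[of _ "drop i P"] exI[of _ "Q @ take i P"]) (simp add: rot_at_def)
next
  case False
  define j where "j = i - length P - 1"
  have i: "i = length P + 1 + j" using False j_def by simp
  show ?thesis using False i assms
    by (intro exI[of _ "drop j Q @ P"] exI[of _ "take j Q"]) (simp add: rot_at_def)
qed

lemma rev_rot_at_append_Cons:
  fixes P Q :: "nat list"
  assumes "i \<le> length P + length Q + 1"
  shows "\<exists>R T. (\<forall>x. rev_rot_at i (P @ x # Q) = R @ x # T) \<and>
     length R = (if i \<le> length P then i + length Q else i - length P - 1)"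
proof (cases "i \<le> length P")
  case True
  show ?thesis using True
    by (intro exI[of _ "rev (take i P) @ rev Q"] exI[of _ "rev (drop i P)"]) (simp add: rev_rot_at_def)
next
  case False
  define j where "j = i - length P - 1"
  have i: "i = length P + 1 + j" using False j_def by simp
  show ?thesis using False i assms
    by (intro exI[of _ "rev (take j Q)"] exI[of _ "rev P @ rev (drop j Q)"]) (simp add: rev_rot_at_def)
qed

lemma rot_at_length[simp]: "rot_at (length xs) xs = xs" by (simp add: rot_at_def)
lemma length_rot_at[simp]: "length (rot_at i xs) = length xs" by (simp add: rot_at_def)
lemma length_rev_rot_at[simp]: "length (rev_rot_at i xs) = length xs" by (simp add: rev_rot_at_def)

text \<open>A comparison with a rotation in which the raised symbol sits no later than in the
  string itself survives automatically; only the other comparisons remain as hypotheses.\<close>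

lemma asym_bracelet_Suc_symbol:
  fixes P Q :: "nat list"
  assumes A: "P @ e # Q \<in> asym_bracelets k n" and ek: "Suc e < k"
    and nx: "\<And>i. length P < i \<Longrightarrow> i < length P + length Q + 1 \<Longrightarrow> P @ Suc e # Q \<le> rot_at i (P @ Suc e # Q)"
    and rx: "\<And>i. i \<le> length P + length Q + 1 \<Longrightarrow>
              (if i \<le> length P then i + length Q else i - length P - 1) > length P \<Longrightarrow>
              P @ Suc e # Q < rev_rot_at i (P @ Suc e # Q)"
  shows "P @ Suc e # Q \<in> asym_bracelets k n"
proof -
  let ?a = "P @ e # Q" and ?b = "P @ Suc e # Q"
  have sa: "?a \<in> strings k n" using A asym_bracelets_strings by blast
  have sb: "?b \<in> strings k n" using sa ek unfolding strings_iff by auto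
  have N: "?b \<le> rot_at i ?b" if i: "i \<le> length ?b" for i
  proof -
    consider "i = 0" | "0 < i" "i \<le> length P" | "length P < i" "i < length ?b" | "i = length ?b"
      using i by linarith
    then show ?thesis
    proof cases
      case 1 then show ?thesis by simp
    next
      case 2
      obtain R T where RT: "\<forall>x. rot_at i (P @ x # Q) = R @ x # T"
        and lR: "length R = (if i \<le> length P then length P - i else length P + length Q + 1 - i + length P)"
        using rot_at_append_Cons[of i P Q] i by auto
      have "?a \<le> rot_at i ?a" using asym_bracelet_le_rot_at[OF A] i by simp
      then have "?a \<le> R @ e # T" using RT by simp
      moreover have "length P > length R" using lR 2 by simp
      ultimately have "?b < R @ Suc e # T" using Suc_shared_le_less by blast
      then show ?thesis using RT by simp
    next
      case 3 then show ?thesis using nx by simp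
    next
      case 4 then show ?thesis by (simp add: rot_at_def)
    qed
  qed
  have Rv: "?b < rev_rot_at i ?b" if i: "i \<le> length ?b" for i
  proof -
    obtain R T where RT: "\<forall>x. rev_rot_at i (P @ x # Q) = R @ x # T"
      and lR: "length R = (if i \<le> length P then i + length Q else i - length P - 1)"
      using rev_rot_at_append_Cons[of i P Q] i by auto
    show ?thesis
    proof (cases "length R \<le> length P")
      case True
      have "?a < rev_rot_at i ?a" using asym_bracelet_less_rev_rot_at[OF A] i by simp
      then have "?a < R @ e # T" using RT by simp
      then have "?b < R @ Suc e # T" using Suc_shared_less True by blast
      then show ?thesis using RT by simp
    next
      case False
      then show ?thesis using rx[of i] i lR by simp
    qed
  qed
  show ?thesis unfolding asym_bracelets_iff_rot_at using sb N Rv by blast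
qed

lemma asym_bracelet_pred_first_nonzero:
  fixes Q :: "nat list"
  assumes A: "replicate z 0 @ Suc e # Q \<in> asym_bracelets k n" and e0: "e \<noteq> 0"
  shows "replicate z 0 @ e # Q \<in> asym_bracelets k n"
proof -
  let ?P = "replicate z (0::nat)"
  let ?a = "?P @ Suc e # Q" and ?b = "?P @ e # Q"
  have sa: "?a \<in> strings k n" using A asym_bracelets_strings by blast
  have sb: "?b \<in> strings k n" using sa unfolding strings_iff by auto
  have zl: "?b < R @ e # T" if "length R < z" "length (R @ e # T) = length ?b" for R T
  proof -
    have "take z (R @ e # T) \<noteq> replicate z 0"
      using take_neq_replicate_zero[of "length R" z "R @ e # T"] that e0 by simp
    then show ?thesis using replicate_zero_append_less[of "R @ e # T" z "e # Q"] that by simp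
  qed
  have N: "?b \<le> rot_at i ?b" if i: "i \<le> length ?b" for i
  proof -
    obtain R T where RT: "\<forall>x. rot_at i (?P @ x # Q) = R @ x # T"
      and lR: "length R = (if i \<le> z then z - i else z + length Q + 1 - i + z)"
      using rot_at_append_Cons[of i ?P Q] i by auto
    have lRT: "length (R @ e # T) = length ?b" using RT length_rot_at by metis
    consider "length R < z" | "length R = z" | "length R > z" by linarith
    then show ?thesis
    proof cases
      case 1 then show ?thesis using zl lRT RT by (simp add: order_less_imp_le)
    next
      case 2
      then have "i = 0 \<or> i = length ?b" using lR i by (auto split: if_splits)
      then show ?thesis by (auto simp: rot_at_def)
    next
      case 3
      have "?a \<le> rot_at i ?a" using asym_bracelet_le_rot_at[OF A] i by simp
      then have "?a \<le> R @ Suc e # T" using RT by simp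
      then have "?b < R @ e # T" using pred_shared_le_less 3 by (metis length_replicate)
      then show ?thesis using RT by simp
    qed
  qed
  have Rv: "?b < rev_rot_at i ?b" if i: "i \<le> length ?b" for i
  proof -
    obtain R T where RT: "\<forall>x. rev_rot_at i (?P @ x # Q) = R @ x # T"
      using rev_rot_at_append_Cons[of i ?P Q] i by auto
    have lRT: "length (R @ e # T) = length ?b" using RT length_rev_rot_at by metis
    show ?thesis
    proof (cases "length R < z")
      case True then show ?thesis using zl lRT RT by simp
    next
      case False
      have "?a < rev_rot_at i ?a" using asym_bracelet_less_rev_rot_at[OF A] i by simp
      then have "?a < R @ Suc e # T" using RT by simp
      then have "?b < R @ e # T" using pred_shared_less False by (metis length_replicate not_less)
      then show ?thesis using RT by simp
    qed
  qed
  show ?thesis unfolding asym_bracelets_iff_rot_at using sb N Rv by blast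
qed

lemma rotation_zero_block:
  fixes v :: "nat list"
  assumes p: "p \<ge> 1" and v: "v \<noteq> []" "hd v \<noteq> 0" "last v \<noteq> 0"
    and ni: "\<not> (\<exists>a b. v = a @ replicate p 0 @ b)"
    and r: "\<rho> \<in> rotations (replicate p 0 @ v)"
  shows "\<rho> = replicate p 0 @ v \<or> take p \<rho> \<noteq> replicate p 0"
proof -
  obtain u w where uw: "replicate p 0 @ v = u @ w" "\<rho> = w @ u" using r by (rule rotationsE)
  show ?thesis
  proof (cases "u = [] \<or> w = []")
    case True then show ?thesis using uw by auto
  next
    case False
    then have u: "u \<noteq> []" and w: "w \<noteq> []" by auto
    obtain us where "(u = replicate p 0 @ us \<and> us @ w = v) \<or> (u @ us = replicate p 0 \<and> w = us @ v)"
      using uw(1) unfolding append_eq_append_conv2 by metis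
    then show ?thesis
    proof
      assume a: "u @ us = replicate p 0 \<and> w = us @ v"
      have lus: "length us < p" using a u by (metis length_append length_greater_0_conv length_replicate less_add_same_cancel2)
      have "\<rho> ! length us = hd v" using a uw(2) v(1) by (simp add: nth_append hd_conv_nth)
      then have "take p \<rho> \<noteq> replicate p 0" using take_neq_replicate_zero[of "length us" p \<rho>] lus v(2) a uw(2) v(1)
        by simp
      then show ?thesis by simp
    next
      assume a: "u = replicate p 0 @ us \<and> us @ w = v"
      show ?thesis
      proof (cases "length w \<ge> p")
        case True
        have "take p \<rho> = take p w" using uw(2) True by simp
        moreover have "take p w \<noteq> replicate p 0"
        proof
          assume "take p w = replicate p 0"
          then have "w = replicate p 0 @ drop p w" by (metis append_take_drop_id)
          then have "v = us @ replicate p 0 @ drop p w" using a by metis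
          then show False using ni by blast
        qed
        ultimately show ?thesis by simp
      next
        case False
        have "\<rho> ! (length w - 1) = last w" using uw(2) w by (simp add: nth_append last_conv_nth)
        moreover have "last w = last v" using a w by (metis last_appendR)
        ultimately have nz: "\<rho> ! (length w - 1) \<noteq> 0" using v(3) by simp
        have j: "length w - 1 < p" "length w - 1 < length \<rho>" using False w uw(2) by (cases w; auto)+
        show ?thesis using take_neq_replicate_zero[OF j nz] by blast
      qed
    qed
  qed
qed

lemma zero_block_asym_bracelet:
  fixes v :: "nat list"
  assumes p: "p \<ge> 1" and v: "v \<noteq> []" "hd v \<noteq> 0" "last v \<noteq> 0"
    and ni: "\<not> (\<exists>a b. v = a @ replicate p 0 @ b)"
    and lt: "v < rev v"
    and s: "replicate p 0 @ v \<in> strings k n"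
  shows "replicate p 0 @ v \<in> asym_bracelets k n"
proof -
  let ?g = "replicate p (0::nat) @ v"
  have N: "?g \<le> rot_at i ?g" if "i \<le> length ?g" for i
  proof -
    have "rot_at i ?g \<in> rotations ?g" unfolding rot_at_def by (rule rotations_appendI) (metis append_take_drop_id)
    then have "rot_at i ?g = ?g \<or> take p (rot_at i ?g) \<noteq> replicate p 0"
      using rotation_zero_block[OF p v ni] by blast
    then show ?thesis
    proof
      assume "take p (rot_at i ?g) \<noteq> replicate p 0"
      then have "?g < rot_at i ?g" using replicate_zero_append_less[of "rot_at i ?g" p v] by simp
      then show ?thesis by simp
    qed simp
  qed
  have vr: "rev v \<noteq> []" "hd (rev v) \<noteq> 0" "last (rev v) \<noteq> 0"
    using v by (simp_all add: hd_rev last_rev)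
  have nir: "\<not> (\<exists>a b. rev v = a @ replicate p 0 @ b)"
  proof
    assume "\<exists>a b. rev v = a @ replicate p 0 @ b"
    then obtain a b where "rev v = a @ replicate p 0 @ b" by blast
    then have "v = rev b @ replicate p 0 @ rev a" by (metis append.assoc rev_append rev_replicate rev_rev_ident)
    then show False using ni by blast
  qed
  have Rv: "?g < rev_rot_at i ?g" if "i \<le> length ?g" for i
  proof -
    have "rev ?g = rev (drop i ?g) @ rev (take i ?g)" by (metis append_take_drop_id rev_append)
    then have r1: "rev_rot_at i ?g \<in> rotations (rev ?g)" unfolding rev_rot_at_def by (rule rotations_appendI)
    have "rev ?g = rev v @ replicate p 0" by simp
    then have "rev ?g \<in> rotations (replicate p 0 @ rev v)" by (simp add: rotations_appendI)
    then have "rotations (rev ?g) = rotations (replicate p 0 @ rev v)" by (rule rotations_eq)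
    then have "rev_rot_at i ?g \<in> rotations (replicate p 0 @ rev v)" using r1 by simp
    then have "rev_rot_at i ?g = replicate p 0 @ rev v \<or> take p (rev_rot_at i ?g) \<noteq> replicate p 0"
      using rotation_zero_block[OF p vr nir] by blast
    then show ?thesis
    proof
      assume "rev_rot_at i ?g = replicate p 0 @ rev v"
      then show ?thesis using lt by (simp add: same_append_less_iff)
    next
      assume "take p (rev_rot_at i ?g) \<noteq> replicate p 0"
      then show ?thesis using replicate_zero_append_less[of "rev_rot_at i ?g" p v] by simp
    qed
  qed
  show ?thesis unfolding asym_bracelets_iff_rot_at using s N Rv by blast
qed

lemma root_string_asym_bracelet:
  assumes "n \<ge> 3" "k \<ge> 3"
  shows "root_string n k \<in> asym_bracelets k n"
proof -
  have "replicate (n - 2) 0 @ [k - 2, k - 1] \<in> asym_bracelets k n"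
  proof (rule zero_block_asym_bracelet)
    show "\<not> (\<exists>a b. [k - 2, k - 1] = a @ replicate (n - 2) 0 @ b)"
    proof
      assume "\<exists>a b. [k - 2, k - 1] = a @ replicate (n - 2) 0 @ b"
      then obtain a b where e: "[k - 2, k - 1] = a @ replicate (n - 2) 0 @ b" by blast
      have "0 \<in> set [k - 2, k - 1]" unfolding e using assms by simp
      then show False using assms by auto
    qed
    have "k - 2 < k - 1" using assms by arith
    then show "[k - 2, k - 1] < rev [k - 2, k - 1]" by simp
    show "replicate (n - 2) 0 @ [k - 2, k - 1] \<in> strings k n" unfolding strings_iff using assms by auto
  qed (use assms in auto)
  then show ?thesis by (simp add: root_string_def)
qed

lemma asym_bracelet_Suc_last:
  assumes A: "x @ [b] \<in> asym_bracelets k n" and "Suc b < k"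
  shows "x @ [Suc b] \<in> asym_bracelets k n"
proof -
  have "x @ Suc b # [] \<in> asym_bracelets k n"
  proof (rule asym_bracelet_Suc_symbol)
    show "x @ b # [] \<in> asym_bracelets k n" using A by simp
    show "Suc b < k" by fact
  next
    fix i assume "length x < i" "i < length x + length ([]::nat list) + 1"
    then show "x @ Suc b # [] \<le> rot_at i (x @ Suc b # [])" by simp
  next
    fix i assume i: "i \<le> length x + length ([]::nat list) + 1"
      and g: "(if i \<le> length x then i + length ([]::nat list) else i - length x - 1) > length x"
    have False using i g by (cases "i \<le> length x") auto
    then show "x @ Suc b # [] < rev_rot_at i (x @ Suc b # [])" ..
  qed
  then show ?thesis by simp
qed

lemma asym_bracelet_hd_le:
  assumes A: "xs \<in> asym_bracelets k n" and "xs = y @ z" "y \<noteq> []" "z \<noteq> []"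
  shows "hd y \<le> hd z"
proof -
  have "xs \<le> rot_at (length y) xs" using asym_bracelet_le_rot_at[OF A] assms by simp
  then have "y @ z \<le> z @ y" using assms by (simp add: rot_at_def)
  then show ?thesis using assms by (cases y; cases z) auto
qed

lemma asym_bracelet_Suc_second_last:
  assumes A: "y @ [b, k - 1] \<in> asym_bracelets k n" and bk: "Suc b < k" and y: "y \<noteq> []"
    and c: "y < rev y \<or> Suc b < k - 1"
  shows "y @ [Suc b, k - 1] \<in> asym_bracelets k n"
proof -
  have hy: "hd y \<le> b" using asym_bracelet_hd_le[OF A, of y "[b, k-1]"] y by simp
  have "y @ Suc b # [k - 1] \<in> asym_bracelets k n"
  proof (rule asym_bracelet_Suc_symbol)
    show "y @ b # [k - 1] \<in> asym_bracelets k n" using A by simp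
    show "Suc b < k" by fact
  next
    fix i assume "length y < i" "i < length y + length [k - 1] + 1"
    then have i: "i = length y + 1" by simp
    have "rot_at i (y @ Suc b # [k - 1]) = (k - 1) # y @ [Suc b]" using i by (simp add: rot_at_def)
    moreover have "y @ Suc b # [k - 1] < (k - 1) # y @ [Suc b]" using hy y bk by (cases y) auto
    ultimately show "y @ Suc b # [k - 1] \<le> rot_at i (y @ Suc b # [k - 1])" by simp
  next
    fix i assume i: "i \<le> length y + length [k - 1] + 1"
      and g: "(if i \<le> length y then i + length [k - 1] else i - length y - 1) > length y"
    have "i = length y"
    proof (cases "i \<le> length y")
      case True then show ?thesis using g by simp
    next
      case False then have "i - length y - 1 > length y" using g by simp
      then show ?thesis using i y by (cases y) auto
    qed
    then have r: "rev_rot_at i (y @ Suc b # [k - 1]) = rev y @ [k - 1, Suc b]"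
       and ra: "rev_rot_at i (y @ [b, k - 1]) = rev y @ [k - 1, b]" by (simp_all add: rev_rot_at_def)
    have "y @ [b, k - 1] < rev y @ [k - 1, b]"
      using asym_bracelet_less_rev_rot_at[OF A, of i] ra \<open>i = length y\<close> by simp
    moreover have "[Suc b, k - 1] < [k - 1, Suc b]" if "y = rev y" using c that by auto
    ultimately show "y @ Suc b # [k - 1] < rev_rot_at i (y @ Suc b # [k - 1])"
      unfolding r using append_less_append_transfer[of y "rev y"] by simp
  qed
  then show ?thesis by simp
qed

lemma asym_bracelet_ternary_0112:
  assumes A: "y1 @ [d, 0, 1, 2] \<in> asym_bracelets 3 n" and d: "d < 2" and y: "y1 \<noteq> []" "hd y1 = 0"
  shows "y1 @ [d, 1, 1, 2] \<in> asym_bracelets 3 n"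
proof -
  let ?P = "y1 @ [d]"
  have "?P @ Suc 0 # [1, 2] \<in> asym_bracelets 3 n"
  proof (rule asym_bracelet_Suc_symbol)
    show "?P @ 0 # [1, 2] \<in> asym_bracelets 3 n" using A by simp
    show "Suc 0 < 3" by simp
  next
    fix i assume "length ?P < i" "i < length ?P + length [1, 2::nat] + 1"
    then have "i = length ?P + 1 \<or> i = length ?P + 2" by auto
    then show "?P @ Suc 0 # [1, 2] \<le> rot_at i (?P @ Suc 0 # [1, 2])"
    proof
      assume "i = length ?P + 1"
      then have "rot_at i (?P @ Suc 0 # [1, 2]) = 1 # 2 # ?P @ [1]" by (simp add: rot_at_def)
      then show ?thesis using y by (cases y1) auto
    next
      assume "i = length ?P + 2"
      then have "rot_at i (?P @ Suc 0 # [1, 2]) = 2 # ?P @ [1, 1]" by (simp add: rot_at_def)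
      then show ?thesis using y by (cases y1) auto
    qed
  next
    fix i assume i: "i \<le> length ?P + length [1, 2::nat] + 1"
      and g: "(if i \<le> length ?P then i + length [1, 2::nat] else i - length ?P - 1) > length ?P"
    have ly: "length y1 \<ge> 1" using y by (cases y1) auto
    have "i = length y1 \<or> i = length y1 + 1"
    proof (cases "i \<le> length ?P")
      case True then show ?thesis using g by auto
    next
      case False then show ?thesis using g i ly by auto
    qed
    then show "?P @ Suc 0 # [1, 2] < rev_rot_at i (?P @ Suc 0 # [1, 2])"
    proof
      assume ii: "i = length y1"
      have r: "rev_rot_at i (?P @ Suc 0 # [1, 2]) = rev y1 @ [2, 1, 1, d]"
        and ra: "rev_rot_at i (?P @ 0 # [1, 2]) = rev y1 @ [2, 1, 0, d]" using ii by (simp_all add: rev_rot_at_def)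
      have "y1 @ [d, 0, 1, 2] < rev y1 @ [2, 1, 0, d]"
        using asym_bracelet_less_rev_rot_at[OF A, of i] ra ii by simp
      then show ?thesis
        unfolding r using append_less_append_transfer[of y1 "rev y1" _ _ "[d, 1, 1, 2]"] d by simp
    next
      assume ii: "i = length y1 + 1"
      have r: "rev_rot_at i (?P @ Suc 0 # [1, 2]) = rev ?P @ [2, 1, 1]"
        and ra: "rev_rot_at i (?P @ 0 # [1, 2]) = rev ?P @ [2, 1, 0]" using ii by (simp_all add: rev_rot_at_def)
      have "?P @ [0, 1, 2] < rev ?P @ [2, 1, 0]"
        using asym_bracelet_less_rev_rot_at[OF A, of i] ra ii by simp
      then show ?thesis
        unfolding r using append_less_append_transfer[of ?P "rev ?P" _ _ "[1, 1, 2]"] by simp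
    qed
  qed
  then show ?thesis by simp
qed

lemma last_symbol_zero_block:
  assumes A: "\<alpha> \<in> asym_bracelets k n" and k: "k \<ge> 2"
    and a: "\<alpha> = replicate z 0 @ v @ replicate t 0 @ [k - 1]"
    and v: "v \<noteq> []" "hd v \<noteq> 0" "last v \<noteq> 0" and lt: "v < rev v"
  shows "last_symbol k \<alpha> = replicate (Suc (z + t)) 0 @ v \<and>
         replicate (Suc (z + t)) 0 @ v \<in> asym_bracelets k n"
proof -
  let ?g = "replicate (Suc (z + t)) (0::nat) @ v"
  have ni1: "\<not> (\<exists>a b. v = a @ replicate (Suc z) 0 @ b)"
  proof
    assume "\<exists>a b. v = a @ replicate (Suc z) 0 @ b"
    then obtain a b where vab: "v = a @ replicate (Suc z) 0 @ b" by blast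
    let ?i = "z + length a"
    have "rot_at ?i \<alpha> = replicate (Suc z) 0 @ (b @ replicate t 0 @ [k - 1] @ replicate z 0 @ a)"
      using a vab by (simp add: rot_at_def)
    moreover have "take (Suc z) \<alpha> \<noteq> replicate (Suc z) 0"
      using take_neq_replicate_zero[of z "Suc z" \<alpha>] a v by (simp add: nth_append hd_conv_nth)
    moreover have "length \<alpha> = Suc z + length (b @ replicate t 0 @ [k - 1] @ replicate z 0 @ a)"
      using a vab by simp
    ultimately have "rot_at ?i \<alpha> < \<alpha>"
      using replicate_zero_append_less[of \<alpha> "Suc z"] by metis
    moreover have "\<alpha> \<le> rot_at ?i \<alpha>" using asym_bracelet_le_rot_at[OF A, of ?i] a vab by simp
    ultimately show False by simp
  qed
  have ni: "\<not> (\<exists>a b. v = a @ replicate (Suc (z + t)) 0 @ b)"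
  proof
    assume "\<exists>a b. v = a @ replicate (Suc (z + t)) 0 @ b"
    then obtain a b where "v = a @ replicate (Suc (z + t)) 0 @ b" by blast
    then have "v = a @ replicate (Suc z) 0 @ (replicate t 0 @ b)"
      by (simp add: replicate_add[symmetric])
    then show False using ni1 by blast
  qed
  have sA: "\<alpha> \<in> strings k n" using A asym_bracelets_strings by blast
  have sg: "?g \<in> strings k n" using sA a k unfolding strings_iff by auto
  have gA: "?g \<in> asym_bracelets k n" using zero_block_asym_bracelet[OF _ v ni lt sg] by simp
  have a': "\<alpha> = (replicate z 0 @ v @ replicate t 0) @ [k - 1]" using a by simp
  have "butlast \<alpha> = replicate z 0 @ v @ replicate t 0" "last \<alpha> = k - 1"
    by (subst a', simp only: butlast_snoc last_snoc)+
  then have d: "butlast \<alpha> @ [(last \<alpha> + 1) mod k] = (replicate z 0 @ v) @ replicate (Suc t) 0"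
    using k by (simp add: replicate_append_same)
  have "?g = replicate (Suc t) 0 @ replicate z 0 @ v" by (simp add: replicate_add[symmetric])
  moreover have "replicate (Suc t) 0 @ (replicate z 0 @ v) \<in> rotations ((replicate z 0 @ v) @ replicate (Suc t) 0)"
    by (rule rotations_appendI) simp
  ultimately have "?g \<in> rotations (butlast \<alpha> @ [(last \<alpha> + 1) mod k])" using d by simp
  then have R: "rotations (butlast \<alpha> @ [(last \<alpha> + 1) mod k]) = rotations ?g" using rotations_eq by metis
  have "Min (rotations ?g) = ?g"
  proof (rule Min_eqI)
    show "finite (rotations ?g)" by (rule finite_rotations)
    show "?g \<in> rotations ?g" by (rule self_in_rotations)
    fix y assume "y \<in> rotations ?g"
    then obtain u w where "?g = u @ w" "y = w @ u" by (rule rotationsE)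
    then show "?g \<le> y" using gA unfolding asym_bracelets_iff_append by blast
  qed
  then have "last_symbol k \<alpha> = ?g" unfolding last_symbol_def necklace_of_def R .
  then show ?thesis using gA by simp
qed

section \<open>The parent operations\<close>

lemma in_set_opt_simps[simp]: "in_set_opt A (Some x) \<longleftrightarrow> x \<in> A" "\<not> in_set_opt A None"
  by (simp_all add: in_set_opt_def)

lemma finite_nonmax_idx: "finite (nonmax_idx k xs)"
  unfolding nonmax_idx_def by simp

lemma nth_append_Cons_replicate:
  assumes "length x < j" "j < length x + 1 + m"
  shows "(x @ b # replicate m c) ! j = c"
proof -
  define i where "i = j - length x - 1"
  have j: "j = length x + Suc i" using assms(1) i_def by arith
  then have "i < m" using assms(2) by simp
  then show ?thesis using j by (simp add: nth_append)
qed

lemma last_non_max_eq: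
  assumes b: "b \<noteq> k - 1"
  shows "last_non_max k (x @ b # replicate m (k - 1)) = Some (x @ Suc b # replicate m (k - 1))"
proof -
  let ?a = "x @ b # replicate m (k - 1)"
  have mem: "length x \<in> nonmax_idx k ?a" using b unfolding nonmax_idx_def by simp
  have bd: "j \<le> length x" if "j \<in> nonmax_idx k ?a" for j
  proof (rule ccontr)
    assume "\<not> j \<le> length x"
    then have "?a ! j = k - 1" using that unfolding nonmax_idx_def
      using nth_append_Cons_replicate[of x j m b "k - 1"] by simp
    then show False using that unfolding nonmax_idx_def by simp
  qed
  have M: "Max (nonmax_idx k ?a) = length x"
    by (rule Max_eqI[OF finite_nonmax_idx bd mem])
  have ne: "nonmax_idx k ?a \<noteq> {}" using mem by blast
  have "last_non_max k ?a = Some (take (length x) ?a @ [?a ! length x + 1] @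
          replicate (length ?a - length x - 1) (k - 1))"
    unfolding last_non_max_def if_not_P[OF ne] Let_def M ..
  then show ?thesis by simp
qed

lemma first_non_min_eq:
  assumes h: "h \<noteq> 0"
  shows "first_non_min (replicate z 0 @ h # s) = Some (replicate z 0 @ (h - 1) # s)"
proof -
  let ?a = "replicate z 0 @ h # s"
  let ?S = "{i. i < length ?a \<and> ?a ! i \<noteq> 0}"
  have mem: "z \<in> ?S" using h by (simp add: nth_append)
  have bd: "z \<le> i" if "i \<in> ?S" for i
  proof (rule ccontr)
    assume "\<not> z \<le> i"
    then have "?a ! i = 0" by (simp add: nth_append)
    then show False using that by simp
  qed
  have M: "Min ?S = z" by (rule Min_eqI) (use mem bd in auto)
  have ne: "?S \<noteq> {}" using mem by blast
  have "first_non_min ?a = Some (replicate (Min ?S) 0 @ [?a ! Min ?S - 1] @ drop (Suc (Min ?S)) ?a)"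
    unfolding first_non_min_def if_not_P[OF ne] Let_def ..
  then show ?thesis unfolding M by (simp add: nth_append)
qed

lemma second_last_non_max_eq:
  assumes d: "d \<noteq> k - 1" and b: "b \<noteq> k - 1"
  shows "second_last_non_max k (x @ d # b # replicate m (k - 1)) = Some (x @ Suc d # b # replicate m (k - 1))"
proof -
  let ?a = "x @ d # b # replicate m (k - 1)"
  let ?N = "nonmax_idx k ?a"
  have m1: "length x \<in> ?N" using d unfolding nonmax_idx_def by simp
  have m2: "Suc (length x) \<in> ?N" using b unfolding nonmax_idx_def by (simp add: nth_append)
  have bd: "j \<le> Suc (length x)" if "j \<in> ?N" for j
  proof (rule ccontr)
    assume "\<not> j \<le> Suc (length x)"
    then have "?a ! j = k - 1" using that unfolding nonmax_idx_def
      using nth_append_Cons_replicate[of "x @ [d]" j m b "k - 1"] by simp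
    then show False using that unfolding nonmax_idx_def by simp
  qed
  have M: "Max ?N = Suc (length x)" by (rule Max_eqI[OF finite_nonmax_idx bd m2])
  have c: "\<not> card ?N < 2"
  proof -
    have "{length x, Suc (length x)} \<subseteq> ?N" using m1 m2 by blast
    then have "card {length x, Suc (length x)} \<le> card ?N" using finite_nonmax_idx by (rule card_mono[rotated])
    then show ?thesis by simp
  qed
  have M2: "Max (?N - {Max ?N}) = length x"
  proof (rule Max_eqI)
    show "finite (?N - {Max ?N})" using finite_nonmax_idx by simp
    show "length x \<in> ?N - {Max ?N}" using m1 M by simp
    fix j assume "j \<in> ?N - {Max ?N}"
    then show "j \<le> length x" using bd M by fastforce
  qed
  have "second_last_non_max k ?a = Some (?a[Max (?N - {Max ?N}) := ?a ! Max (?N - {Max ?N}) + 1])"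
    unfolding second_last_non_max_def if_not_P[OF c] Let_def ..
  then show ?thesis unfolding M2 by (simp add: list_update_append)
qed

lemma last_non_max_SomeD:
  assumes "last_non_max k \<alpha> = Some \<beta>"
  shows "\<exists>p < length \<alpha>. \<beta> = \<alpha>[p := Suc (\<alpha> ! p)] \<and> \<alpha> ! p \<noteq> k - 1 \<and>
           (\<forall>i. p < i \<and> i < length \<alpha> \<longrightarrow> \<alpha> ! i = k - 1)"
proof -
  let ?N = "nonmax_idx k \<alpha>"
  have ne: "?N \<noteq> {}"
  proof
    assume "?N = {}"
    then have "last_non_max k \<alpha> = None" unfolding last_non_max_def by simp
    then show False using assms by simp
  qed
  define j where "j = Max ?N"
  have jN: "j \<in> ?N" using Max_in[OF finite_nonmax_idx ne] j_def by simp
  then have jl: "j < length \<alpha>" unfolding nonmax_idx_def by simp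
  have after: "\<alpha> ! i = k - 1" if "j < i" "i < length \<alpha>" for i
  proof (rule ccontr)
    assume "\<alpha> ! i \<noteq> k - 1"
    then have "i \<in> ?N" using that unfolding nonmax_idx_def by simp
    then have "i \<le> j" using Max_ge[OF finite_nonmax_idx] j_def by simp
    then show False using that by simp
  qed
  have "last_non_max k \<alpha> = Some (take j \<alpha> @ [\<alpha> ! j + 1] @ replicate (length \<alpha> - j - 1) (k - 1))"
    unfolding last_non_max_def if_not_P[OF ne] Let_def j_def ..
  then have b: "\<beta> = take j \<alpha> @ [\<alpha> ! j + 1] @ replicate (length \<alpha> - j - 1) (k - 1)"
    using assms by simp
  have "drop (Suc j) \<alpha> = replicate (length \<alpha> - j - 1) (k - 1)"
  proof (rule nth_equalityI)
    show "length (drop (Suc j) \<alpha>) = length (replicate (length \<alpha> - j - 1) (k - 1))" by simp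
    fix i assume "i < length (drop (Suc j) \<alpha>)"
    then show "drop (Suc j) \<alpha> ! i = replicate (length \<alpha> - j - 1) (k - 1) ! i"
      using after[of "Suc j + i"] by simp
  qed
  then have "\<beta> = \<alpha>[j := Suc (\<alpha> ! j)]" using b jl by (simp add: upd_conv_take_nth_drop)
  moreover have "\<alpha> ! j \<noteq> k - 1" using jN unfolding nonmax_idx_def by simp
  ultimately show ?thesis using jl after by blast
qed

lemma first_non_min_SomeD:
  assumes "first_non_min \<alpha> = Some \<beta>"
  shows "\<exists>p < length \<alpha>. \<alpha> ! p \<noteq> 0 \<and> \<beta> = \<alpha>[p := \<alpha> ! p - 1]"
proof -
  let ?S = "{i. i < length \<alpha> \<and> \<alpha> ! i \<noteq> 0}"
  have ne: "?S \<noteq> {}"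
  proof
    assume "?S = {}"
    then have "first_non_min \<alpha> = None" unfolding first_non_min_def by simp
    then show False using assms by simp
  qed
  have fin: "finite ?S" by simp
  define i where "i = Min ?S"
  have iS: "i \<in> ?S" using Min_in[OF fin ne] i_def by simp
  have before: "\<alpha> ! j = 0" if "j < i" for j
  proof (rule ccontr)
    assume "\<alpha> ! j \<noteq> 0"
    then have "j \<in> ?S" using that iS by simp
    then have "i \<le> j" using Min_le[OF fin] i_def by simp
    then show False using that by simp
  qed
  have "first_non_min \<alpha> = Some (replicate i 0 @ [\<alpha> ! i - 1] @ drop (Suc i) \<alpha>)"
    unfolding first_non_min_def if_not_P[OF ne] Let_def i_def ..
  then have b: "\<beta> = replicate i 0 @ [\<alpha> ! i - 1] @ drop (Suc i) \<alpha>" using assms by simp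
  have "take i \<alpha> = replicate i 0"
  proof (rule nth_equalityI)
    show "length (take i \<alpha>) = length (replicate i (0::nat))" using iS by simp
    fix j assume "j < length (take i \<alpha>)"
    then show "take i \<alpha> ! j = replicate i 0 ! j" using before[of j] by simp
  qed
  then have "\<beta> = \<alpha>[i := \<alpha> ! i - 1]" using b iS by (simp add: upd_conv_take_nth_drop)
  then show ?thesis using iS by blast
qed

lemma second_last_non_max_SomeD:
  assumes "second_last_non_max k \<alpha> = Some \<beta>"
  shows "\<exists>p < length \<alpha>. \<beta> = \<alpha>[p := Suc (\<alpha> ! p)]"
proof -
  let ?N = "nonmax_idx k \<alpha>"
  have c: "\<not> card ?N < 2"
  proof
    assume "card ?N < 2"
    then have "second_last_non_max k \<alpha> = None" unfolding second_last_non_max_def by simp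
    then show False using assms by simp
  qed
  have ne: "?N - {Max ?N} \<noteq> {}"
  proof
    assume "?N - {Max ?N} = {}"
    then have "?N \<subseteq> {Max ?N}" by blast
    then have "card ?N \<le> card {Max ?N}" by (rule card_mono[rotated]) simp
    then have "card ?N \<le> 1" by simp
    then show False using c by simp
  qed
  define l where "l = Max (?N - {Max ?N})"
  have "l \<in> ?N - {Max ?N}" using Max_in[OF _ ne] finite_nonmax_idx l_def by simp
  then have ll: "l < length \<alpha>" unfolding nonmax_idx_def by simp
  have "second_last_non_max k \<alpha> = Some (\<alpha>[l := \<alpha> ! l + 1])"
    unfolding second_last_non_max_def if_not_P[OF c] Let_def l_def ..
  then have "\<beta> = \<alpha>[l := \<alpha> ! l + 1]" using assms by simp
  then show ?thesis using ll by auto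
qed

lemma rotations_last_symbol:
  assumes "\<alpha> \<noteq> []"
  shows "rotations (last_symbol k \<alpha>) = rotations (\<alpha>[length \<alpha> - 1 := (last \<alpha> + 1) mod k])"
proof -
  let ?d = "butlast \<alpha> @ [(last \<alpha> + 1) mod k]"
  have d: "?d = \<alpha>[length \<alpha> - 1 := (last \<alpha> + 1) mod k]"
    using assms by (cases \<alpha> rule: rev_cases) (auto simp: list_update_append)
  have "Min (rotations ?d) \<in> rotations ?d"
    using Min_in[OF finite_rotations] self_in_rotations by blast
  then have "rotations (Min (rotations ?d)) = rotations ?d" by (rule rotations_eq)
  then show ?thesis unfolding last_symbol_def necklace_of_def d .
qed

lemma rotations_differ_at_one_position:
  assumes p: "p < length \<alpha>" and x: "x \<noteq> \<alpha> ! p" and g: "rotations g0 = rotations (\<alpha>[p := x])"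
  shows "\<exists>\<beta> \<in> rotations \<alpha>. \<exists>\<gamma> \<in> rotations g0. hd \<beta> \<noteq> hd \<gamma> \<and> tl \<beta> = tl \<gamma>"
proof -
  let ?a = "\<alpha>[p := x]"
  have b: "drop p \<alpha> @ take p \<alpha> \<in> rotations \<alpha>" by (rule rotations_appendI) simp
  have c: "drop p ?a @ take p ?a \<in> rotations g0" unfolding g by (rule rotations_appendI) (rule append_take_drop_id[symmetric])
  have d1: "drop p \<alpha> = \<alpha> ! p # drop (Suc p) \<alpha>" using p by (simp add: Cons_nth_drop_Suc)
  have pl: "p < length ?a" using p by simp
  have e0: "drop p ?a = ?a ! p # drop (Suc p) ?a" using Cons_nth_drop_Suc[OF pl] by simp
  have e1: "?a ! p = x" using p by simp
  have e2: "drop (Suc p) ?a = drop (Suc p) \<alpha>" by simp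
  have d2: "drop p ?a = x # drop (Suc p) \<alpha>" using e0 unfolding e1 e2 .
  have t: "take p ?a = take p \<alpha>" by simp
  have "hd (drop p \<alpha> @ take p \<alpha>) \<noteq> hd (drop p ?a @ take p ?a)" using d1 d2 x by simp
  moreover have "tl (drop p \<alpha> @ take p \<alpha>) = tl (drop p ?a @ take p ?a)" using d1 d2 t by simp
  ultimately show ?thesis using b c by blast
qed

lemma par_eq_last_non_max:
  assumes "last_non_max k \<alpha> = Some b" "b \<in> asym_bracelets k n"
  shows "par k n \<alpha> = b"
  unfolding par_def par_candidates_def using assms by simp

lemma par_eq_last_symbol:
  assumes "\<not> in_set_opt (asym_bracelets k n) (last_non_max k \<alpha>)" "last_symbol k \<alpha> \<in> asym_bracelets k n"
  shows "par k n \<alpha> = last_symbol k \<alpha>"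
  unfolding par_def par_candidates_def using assms by simp

lemma par_eq_first_non_min:
  assumes "\<not> in_set_opt (asym_bracelets k n) (last_non_max k \<alpha>)" "last_symbol k \<alpha> \<notin> asym_bracelets k n"
    "first_non_min \<alpha> = Some b" "b \<in> asym_bracelets k n"
  shows "par k n \<alpha> = b"
  unfolding par_def par_candidates_def using assms by simp

lemma par_eq_second_last_non_max:
  assumes "\<not> in_set_opt (asym_bracelets k n) (last_non_max k \<alpha>)" "last_symbol k \<alpha> \<notin> asym_bracelets k n"
    "\<not> in_set_opt (asym_bracelets k n) (first_non_min \<alpha>)"
    "second_last_non_max k \<alpha> = Some b" "b \<in> asym_bracelets k n"
  shows "par k n \<alpha> = b"
  unfolding par_def par_candidates_def using assms by simp

section \<open>A progress measure\<close>

definition lead_zeros :: "nat list \<Rightarrow> nat" where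
  "lead_zeros xs = length (takeWhile (\<lambda>x. x = 0) xs)"

definition tail_max :: "nat \<Rightarrow> nat list \<Rightarrow> bool" where
  "tail_max k xs \<longleftrightarrow> (\<forall>i. lead_zeros xs < i \<and> i < length xs \<longrightarrow> xs ! i = k - 1)"

text \<open>The weight is k + h when all symbols after the first nonzero one h are maximal, where
  LastNonMax raises h itself, and -h otherwise, where FirstNonMin lowers h.\<close>

definition weight :: "nat \<Rightarrow> nat list \<Rightarrow> int" where
  "weight k xs = (if tail_max k xs then int k + int (xs ! lead_zeros xs) else - int (xs ! lead_zeros xs))"

definition par_less :: "nat \<Rightarrow> nat list \<Rightarrow> nat list \<Rightarrow> bool" where
  "par_less k a b \<longleftrightarrow> lead_zeros a < lead_zeros b \<or>
     (lead_zeros a = lead_zeros b \<and> (weight k a < weight k b \<or> (weight k a = weight k b \<and> a < b)))"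

lemma par_less_trans: "par_less k a b \<Longrightarrow> par_less k b c \<Longrightarrow> par_less k a c"
  unfolding par_less_def by (auto intro: less_trans)

lemma par_less_irrefl: "\<not> par_less k a a"
  unfolding par_less_def by simp

lemma par_less_lead_zeros: "lead_zeros a < lead_zeros b \<Longrightarrow> par_less k a b"
  unfolding par_less_def by simp

lemma lead_zeros_replicate_append: "lead_zeros (replicate m 0 @ ys) = m + lead_zeros ys"
  by (induct m) (auto simp: lead_zeros_def)

lemma lead_zeros_Cons: "x \<noteq> 0 \<Longrightarrow> lead_zeros (x # s) = 0"
  by (simp add: lead_zeros_def)

lemma lead_zeros_first_nonzero: "h \<noteq> 0 \<Longrightarrow> lead_zeros (replicate z 0 @ h # s) = z"
  by (simp add: lead_zeros_replicate_append lead_zeros_Cons)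

lemma nth_first_nonzero: "(replicate z 0 @ h # s) ! z = h"
  by (simp add: nth_append)

lemma lead_zeros_ge:
  assumes "take m xs = replicate m 0" "m \<le> length xs"
  shows "m \<le> lead_zeros xs"
proof -
  have "xs = replicate m 0 @ drop m xs" using assms by (metis append_take_drop_id)
  then have "lead_zeros xs = m + lead_zeros (drop m xs)" by (metis lead_zeros_replicate_append)
  then show ?thesis by simp
qed

lemma tail_max_iff:
  assumes h: "h \<noteq> 0"
  shows "tail_max k (replicate z 0 @ h # s) \<longleftrightarrow> (\<forall>x\<in>set s. x = k - 1)"
proof
  assume sp: "tail_max k (replicate z 0 @ h # s)"
  show "\<forall>x\<in>set s. x = k - 1"
  proof
    fix x assume "x \<in> set s"
    then obtain j where j: "j < length s" "s ! j = x" by (auto simp: in_set_conv_nth)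
    have "(replicate z 0 @ h # s) ! (z + Suc j) = k - 1"
      using sp j(1) unfolding tail_max_def lead_zeros_first_nonzero[OF h] by simp
    then show "x = k - 1" using j by (simp add: nth_append)
  qed
next
  assume a: "\<forall>x\<in>set s. x = k - 1"
  show "tail_max k (replicate z 0 @ h # s)"
    unfolding tail_max_def lead_zeros_first_nonzero[OF h]
  proof (intro allI impI)
    fix i assume i: "z < i \<and> i < length (replicate z 0 @ h # s)"
    define j where "j = i - z - 1"
    have ij: "i = z + Suc j" using i j_def by arith
    have "j < length s" using i ij by simp
    then have "(replicate z 0 @ h # s) ! i = s ! j" using ij by (simp add: nth_append)
    then show "(replicate z 0 @ h # s) ! i = k - 1" using a \<open>j < length s\<close> by simp
  qed
qed

lemma asym_bracelet_neq_replicate: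
  assumes A: "\<alpha> \<in> asym_bracelets k n"
  shows "\<alpha> \<noteq> replicate z 0 @ replicate m x"
proof
  assume a: "\<alpha> = replicate z 0 @ replicate m x"
  have "rev_rot_at z \<alpha> = \<alpha>" using a by (simp add: rev_rot_at_def)
  moreover have "\<alpha> < rev_rot_at z \<alpha>" using asym_bracelet_less_rev_rot_at[OF A, of z] a by simp
  ultimately show False by simp
qed

lemma first_nonzero_split:
  "(\<exists>x\<in>set \<alpha>. x \<noteq> (0::nat)) \<Longrightarrow> \<exists>z h s. \<alpha> = replicate z 0 @ h # s \<and> h \<noteq> 0"
proof (induction \<alpha>)
  case Nil then show ?case by simp
next
  case (Cons a \<alpha>)
  show ?case
  proof (cases "a = 0")
    case False then show ?thesis by (intro exI[of _ 0] exI[of _ a] exI[of _ \<alpha>]) simp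
  next
    case True
    then have "\<exists>x\<in>set \<alpha>. x \<noteq> 0" using Cons.prems by simp
    then obtain z h s where "\<alpha> = replicate z 0 @ h # s" "h \<noteq> 0" using Cons.IH by blast
    then show ?thesis using True by (intro exI[of _ "Suc z"] exI[of _ h] exI[of _ s]) simp
  qed
qed

lemma asym_bracelet_first_nonzero:
  assumes A: "\<alpha> \<in> asym_bracelets k n"
  shows "\<exists>z h s. \<alpha> = replicate z 0 @ h # s \<and> h \<noteq> 0"
proof (rule first_nonzero_split)
  show "\<exists>x\<in>set \<alpha>. x \<noteq> 0"
  proof (rule ccontr)
    assume "\<not> (\<exists>x\<in>set \<alpha>. x \<noteq> 0)"
    then have "\<forall>x\<in>set \<alpha>. x = 0" by blast
    then have "replicate (length \<alpha>) 0 = \<alpha>" by (rule replicate_length_same)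
    then have "\<alpha> = replicate (length \<alpha>) 0 @ replicate 0 0" by simp
    then show False using asym_bracelet_neq_replicate[OF A] by blast
  qed
qed

lemma par_less_Suc_after_first_nonzero:
  assumes a: "\<alpha> = replicate z 0 @ h # s" and h: "h \<noteq> 0" and p: "z < p" "p < length \<alpha>"
    and nm: "\<alpha> ! p \<noteq> k - 1"
  shows "par_less k \<alpha> (\<alpha>[p := Suc (\<alpha> ! p)])"
proof -
  define q where "q = p - z - 1"
  have pq: "p = z + Suc q" using p q_def by arith
  have q: "q < length s" using p pq a by simp
  have ap: "\<alpha> ! p = s ! q" using a pq by (simp add: nth_append)
  define s' where "s' = s[q := Suc (s ! q)]"
  have b: "\<alpha>[p := Suc (\<alpha> ! p)] = replicate z 0 @ h # s'"
    using a pq ap by (simp add: list_update_append s'_def)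
  have ns: "\<not> tail_max k \<alpha>"
  proof
    assume "tail_max k \<alpha>"
    then have "\<forall>x\<in>set s. x = k - 1" using tail_max_iff[OF h] a by simp
    then show False using nm ap q by (metis nth_mem)
  qed
  have Ma: "weight k \<alpha> = - int h" using ns a unfolding weight_def by (simp add: lead_zeros_first_nonzero[OF h] nth_first_nonzero)
  have ls: "s < s'"
  proof -
    have "s = take q s @ s ! q # drop (Suc q) s" using q by (simp add: id_take_nth_drop)
    moreover have "s' = take q s @ Suc (s ! q) # drop (Suc q) s" using q
      by (simp add: s'_def upd_conv_take_nth_drop)
    ultimately show ?thesis using same_append_less_iff by (metis Cons_less_Cons lessI)
  qed
  have lab: "\<alpha> < \<alpha>[p := Suc (\<alpha> ! p)]" using a b ls same_append_less_iff[of "replicate z 0 @ [h]" s s'] by simp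
  have lzb: "lead_zeros (\<alpha>[p := Suc (\<alpha> ! p)]) = z" using b lead_zeros_first_nonzero[OF h] by simp
  have lza: "lead_zeros \<alpha> = z" using a lead_zeros_first_nonzero[OF h] by simp
  have Mb: "weight k (\<alpha>[p := Suc (\<alpha> ! p)]) \<ge> - int h"
    using b unfolding weight_def lzb by (simp add: nth_append)
  show ?thesis unfolding par_less_def lza lzb using Ma Mb lab by auto
qed

lemma par_less_last_non_max:
  assumes A: "\<alpha> \<in> asym_bracelets k n" and k: "k \<ge> 3" and L: "last_non_max k \<alpha> = Some \<beta>"
  shows "par_less k \<alpha> \<beta>"
proof -
  obtain p where p: "p < length \<alpha>" "\<beta> = \<alpha>[p := Suc (\<alpha> ! p)]" "\<alpha> ! p \<noteq> k - 1"
    and after: "\<And>i. p < i \<Longrightarrow> i < length \<alpha> \<Longrightarrow> \<alpha> ! i = k - 1"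
    using last_non_max_SomeD[OF L] by blast
  obtain z h s where a: "\<alpha> = replicate z 0 @ h # s" and h: "h \<noteq> 0" using asym_bracelet_first_nonzero[OF A] by blast
  have lza: "lead_zeros \<alpha> = z" using a lead_zeros_first_nonzero[OF h] by simp
  have ha: "\<alpha> ! z = h" using a by (simp add: nth_append)
  consider "p < z" | "p = z" | "z < p" by linarith
  then show ?thesis
  proof cases
    case 1
    have zl: "z < length \<alpha>" using a by simp
    have hk: "h = k - 1" using after[OF 1 zl] ha by simp
    have sk: "\<forall>x\<in>set s. x = k - 1"
    proof
      fix x assume "x \<in> set s"
      then obtain j where j: "j < length s" "s ! j = x" by (auto simp: in_set_conv_nth)
      have "\<alpha> ! (z + Suc j) = k - 1" using after[of "z + Suc j"] 1 j a by simp
      then show "x = k - 1" using a j by (simp add: nth_append)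
    qed
    then have "s = replicate (length s) (k - 1)" by (metis replicate_length_same)
    then have "\<alpha> = replicate z 0 @ replicate (Suc (length s)) (k - 1)" using a hk by simp
    then show ?thesis using asym_bracelet_neq_replicate[OF A] by blast
  next
    case 2
    have spa: "tail_max k \<alpha>" unfolding tail_max_def lza using after 2 by blast
    then have sk: "\<forall>x\<in>set s. x = k - 1" using tail_max_iff[OF h] a by simp
    have b: "\<beta> = replicate z 0 @ Suc h # s" using p(2) 2 a nth_first_nonzero[of z h s] by (simp add: list_update_append)
    have lzb: "lead_zeros \<beta> = z" using b lead_zeros_first_nonzero by simp
    have spb: "tail_max k \<beta>" using b sk tail_max_iff[of "Suc h"] by simp
    have "weight k \<alpha> = int k + int h" using spa unfolding weight_def lza ha by simp
    moreover have "weight k \<beta> = int k + int (Suc h)" using spb b unfolding weight_def lzb by (simp add: nth_append)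
    ultimately show ?thesis unfolding par_less_def lza lzb by simp
  next
    case 3
    show ?thesis using par_less_Suc_after_first_nonzero[OF a h 3 p(1)] p by simp
  qed
qed

lemma par_less_first_non_min_one:
  "par_less k (replicate z 0 @ Suc 0 # s) (replicate z 0 @ 0 # s)"
proof -
  have "lead_zeros (replicate z 0 @ 0 # s) = Suc z + lead_zeros s"
    using lead_zeros_replicate_append[of "Suc z" s] by (simp add: replicate_append_same[symmetric])
  moreover have "lead_zeros (replicate z 0 @ Suc 0 # s) = z" using lead_zeros_first_nonzero by simp
  ultimately show ?thesis by (intro par_less_lead_zeros) simp
qed

lemma par_less_first_non_min:
  assumes h: "h \<ge> 2" and ns: "\<not> tail_max k (replicate z 0 @ h # s)"
  shows "par_less k (replicate z 0 @ h # s) (replicate z 0 @ (h - 1) # s)"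
proof -
  have h0: "h \<noteq> 0" "h - 1 \<noteq> 0" using h by auto
  have ns2: "\<not> tail_max k (replicate z 0 @ (h - 1) # s)" using ns tail_max_iff[OF h0(1)] tail_max_iff[OF h0(2)] by simp
  have "weight k (replicate z 0 @ h # s) = - int h" using ns unfolding weight_def lead_zeros_first_nonzero[OF h0(1)] by (simp add: nth_append)
  moreover have "weight k (replicate z 0 @ (h - 1) # s) = - int (h - 1)" using ns2 unfolding weight_def lead_zeros_first_nonzero[OF h0(2)]
    by (simp add: nth_append)
  ultimately show ?thesis unfolding par_less_def lead_zeros_first_nonzero[OF h0(1)] lead_zeros_first_nonzero[OF h0(2)] using h by auto
qed

lemma par_less_last_symbol:
  assumes a: "\<alpha> = replicate z 0 @ h # s" and h: "h \<noteq> 0" and l: "last \<alpha> = k - 1" and k: "k \<ge> 1"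
  shows "par_less k \<alpha> (last_symbol k \<alpha>)"
proof -
  let ?d = "butlast \<alpha> @ [(last \<alpha> + 1) mod k]"
  have m: "(last \<alpha> + 1) mod k = 0" using l k by simp
  have bl: "butlast \<alpha> = replicate z 0 @ butlast (h # s)" using a by (simp add: butlast_append)
  let ?r = "replicate (Suc z) 0 @ butlast (h # s)"
  have "?r \<in> rotations ?d"
  proof -
    have "?d = butlast \<alpha> @ [0]" using m by simp
    moreover have "[0] @ butlast \<alpha> \<in> rotations (butlast \<alpha> @ [0])" by (rule rotations_appendI) simp
    moreover have "[0] @ butlast \<alpha> = ?r" using bl by simp
    ultimately show ?thesis by simp
  qed
  then have le: "Min (rotations ?d) \<le> ?r" using Min_le[OF finite_rotations] by blast
  have mi: "Min (rotations ?d) \<in> rotations ?d" using Min_in[OF finite_rotations] self_in_rotations by blast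
  have len: "length (Min (rotations ?d)) = length ?r"
    using length_rotations[OF mi] length_rotations[OF \<open>?r \<in> rotations ?d\<close>] by simp
  have tk: "take (Suc z) ?r = replicate (Suc z) 0" by simp
  have sl: "Suc z \<le> length ?r" by simp
  have "take (Suc z) (Min (rotations ?d)) = replicate (Suc z) 0"
    using take_replicate_zero_if_le[OF le len tk sl] .
  then have "Suc z \<le> lead_zeros (Min (rotations ?d))" using lead_zeros_ge len sl by simp
  moreover have "lead_zeros \<alpha> = z" using a lead_zeros_first_nonzero[OF h] by simp
  ultimately show ?thesis unfolding last_symbol_def necklace_of_def by (intro par_less_lead_zeros) simp
qed

lemma strip_trailing_zeros:
  fixes w :: "nat list"
  shows "w \<noteq> [] \<Longrightarrow> hd w \<noteq> 0 \<Longrightarrow> \<exists>v t. w = v @ replicate t 0 \<and> v \<noteq> [] \<and> hd v = hd w \<and> last v \<noteq> 0"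
proof (induction w rule: rev_induct)
  case Nil then show ?case by simp
next
  case (snoc x w)
  show ?case
  proof (cases "x = 0")
    case False
    then show ?thesis using snoc.prems by (intro exI[of _ "w @ [x]"] exI[of _ 0]) simp
  next
    case True
    then have "w \<noteq> []" using snoc.prems by auto
    then have "hd w \<noteq> 0" using snoc.prems by simp
    then obtain v t where "w = v @ replicate t 0" "v \<noteq> []" "hd v = hd w" "last v \<noteq> 0"
      using snoc.IH \<open>w \<noteq> []\<close> by blast
    then show ?thesis using True \<open>w \<noteq> []\<close>
      by (intro exI[of _ v] exI[of _ "Suc t"]) (simp add: replicate_append_same[symmetric])
  qed
qed

section \<open>Progress of Par\<close>

lemma par_progress_last_non_max:
  assumes A: "\<alpha> \<in> asym_bracelets k n" and k: "k \<ge> 3"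
    and L: "last_non_max k \<alpha> = Some \<beta>" and B: "\<beta> \<in> asym_bracelets k n"
  shows "par k n \<alpha> \<in> asym_bracelets k n \<and> par_less k \<alpha> (par k n \<alpha>)"
  using par_eq_last_non_max[OF L B] B par_less_last_non_max[OF A k L] by simp

lemma par_progress_last_symbol:
  assumes a: "\<alpha> = replicate z 0 @ h # s" and h: "h \<noteq> 0" and last: "last \<alpha> = k - 1" and k: "k \<ge> 3"
    and nL: "\<not> in_set_opt (asym_bracelets k n) (last_non_max k \<alpha>)"
    and S: "last_symbol k \<alpha> \<in> asym_bracelets k n"
  shows "par k n \<alpha> \<in> asym_bracelets k n \<and> par_less k \<alpha> (par k n \<alpha>)"
  using par_eq_last_symbol[OF nL S] S par_less_last_symbol[OF a h last] k by simp

lemma tail_max_parent_exists: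
  assumes n: "n \<ge> 3" and k: "k \<ge> 3" and A: "\<alpha> \<in> asym_bracelets k n" and nr: "\<alpha> \<noteq> root_string n k"
    and a: "\<alpha> = replicate z 0 @ h # s" and h: "h \<noteq> 0" and sp: "tail_max k \<alpha>"
    and last: "last \<alpha> = k - 1"
  shows "in_set_opt (asym_bracelets k n) (last_non_max k \<alpha>) \<or> last_symbol k \<alpha> \<in> asym_bracelets k n"
proof -
  have s: "length \<alpha> = n" "\<forall>x\<in>set \<alpha>. x < k"
    using asym_bracelets_strings[OF A] unfolding strings_iff by auto
  have "\<forall>x\<in>set s. x = k - 1" using tail_max_iff[OF h] sp a by simp
  then have sr: "s = replicate (length s) (k - 1)" by (metis replicate_length_same)
  have hk: "h < k - 1"
  proof -
    have "h \<noteq> k - 1"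
    proof
      assume "h = k - 1"
      then have "\<alpha> = replicate z 0 @ replicate (Suc (length s)) (k - 1)" using a sr by (metis replicate_Suc)
      then show False using asym_bracelet_neq_replicate[OF A] by blast
    qed
    then show ?thesis using s(2) a by auto
  qed
  have "s \<noteq> []"
  proof
    assume "s = []"
    then have "\<alpha> = replicate z 0 @ replicate 1 (k - 1)" using a last by simp
    then show False using asym_bracelet_neq_replicate[OF A] by blast
  qed
  then consider "length s = 1" | m where "length s = Suc (Suc m)"
    by (cases s; cases "tl s") auto
  then show ?thesis
  proof cases
    case 1
    then have "s = [k - 1]" using sr by (metis One_nat_def replicate_0 replicate_Suc)
    then have a3: "\<alpha> = replicate z 0 @ [h, k - 1]" using a by simp
    then have zn: "z = n - 2" using s(1) by simp
    have "Suc h < k - 1"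
    proof (rule ccontr)
      assume "\<not> Suc h < k - 1"
      then have "\<alpha> = root_string n k" using a3 zn hk by (simp add: root_string_def)
      then show False using nr by simp
    qed
    moreover have "last_non_max k \<alpha> = Some (replicate z 0 @ [Suc h, k - 1])"
      using last_non_max_eq[of h k "replicate z 0" 1] hk a3 by simp
    ultimately show ?thesis
      using asym_bracelet_Suc_second_last[of "replicate z 0" h k n] A a3 zn n by simp
  next
    case (2 m)
    let ?v = "h # replicate (Suc m) (k - 1)"
    have a4: "\<alpha> = replicate z 0 @ ?v @ replicate 0 0 @ [k - 1]"
      using a sr 2 by (simp add: replicate_append_same)
    have "rev ?v = (k - 1) # (replicate m (k - 1) @ [h])" by (simp add: replicate_append_same)
    then have "?v < rev ?v" using hk by simp
    then show ?thesis using last_symbol_zero_block[OF A _ a4] h k by simp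
  qed
qed

lemma par_progress_first_non_min:
  assumes n: "n \<ge> 3" and k: "k \<ge> 3" and A: "\<alpha> \<in> asym_bracelets k n" and nr: "\<alpha> \<noteq> root_string n k"
    and a: "\<alpha> = replicate z 0 @ h # s" and h: "h \<ge> 2" and last: "last \<alpha> = k - 1"
    and nL: "\<not> in_set_opt (asym_bracelets k n) (last_non_max k \<alpha>)"
    and nS: "last_symbol k \<alpha> \<notin> asym_bracelets k n"
  shows "par k n \<alpha> \<in> asym_bracelets k n \<and> par_less k \<alpha> (par k n \<alpha>)"
proof -
  have h0: "h \<noteq> 0" using h by simp
  obtain e where e: "h = Suc e" "e \<noteq> 0" using h by (cases h) auto
  have F: "first_non_min \<alpha> = Some (replicate z 0 @ (h - 1) # s)" using first_non_min_eq[OF h0] a by simp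
  have FA: "replicate z 0 @ (h - 1) # s \<in> asym_bracelets k n"
    using asym_bracelet_pred_first_nonzero[of z e s k n] A a e by simp
  have "\<not> tail_max k \<alpha>" using tail_max_parent_exists[OF n k A nr a h0 _ last] nL nS by blast
  then show ?thesis
    using par_eq_first_non_min[OF nL nS F FA] FA par_less_first_non_min[OF h] a by simp
qed

lemma blocked_decomposition:
  assumes A: "\<alpha> \<in> asym_bracelets k n" and k: "k \<ge> 2"
    and a: "\<alpha> = replicate z 0 @ h # s" and h: "h \<noteq> 0" and last: "last \<alpha> = k - 1"
    and nS: "last_symbol k \<alpha> \<notin> asym_bracelets k n"
  obtains v t where "\<alpha> = replicate z 0 @ v @ replicate t 0 @ [k - 1]"
    "v \<noteq> []" "hd v = h" "last v \<noteq> 0" "\<not> v < rev v"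
proof -
  have "s \<noteq> []"
  proof
    assume "s = []"
    then have "\<alpha> = replicate z 0 @ replicate 1 (k - 1)" using a last by simp
    then show False using asym_bracelet_neq_replicate[OF A] by blast
  qed
  moreover have "last s = k - 1" using a last \<open>s \<noteq> []\<close> by simp
  ultimately have "s = butlast s @ [k - 1]" by (metis append_butlast_last_id)
  then have "h # s = (h # butlast s) @ [k - 1]" by simp
  moreover obtain v t where "h # butlast s = v @ replicate t 0" and v: "v \<noteq> []" "hd v = h" "last v \<noteq> 0"
    using strip_trailing_zeros[of "h # butlast s"] h by auto
  ultimately have a2: "\<alpha> = replicate z 0 @ v @ replicate t 0 @ [k - 1]" using a by simp
  have "\<not> v < rev v" using last_symbol_zero_block[OF A k a2 v(1) _ v(3)] v(2) h nS by auto
  then show thesis using that a2 v by blast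
qed

lemma last_non_max_blocked:
  assumes n: "n \<ge> 3" and A: "\<alpha> \<in> asym_bracelets k n"
    and nL: "\<not> in_set_opt (asym_bracelets k n) (last_non_max k \<alpha>)"
    and ay: "\<alpha> = y @ [b, k - 1]" and b: "b \<noteq> k - 1"
  shows "\<not> (y < rev y \<or> Suc b < k - 1)"
proof
  assume c: "y < rev y \<or> Suc b < k - 1"
  have "y \<noteq> []" using ay asym_bracelets_strings[OF A] n unfolding strings_iff by auto
  moreover have "Suc b < k" using b asym_bracelets_strings[OF A] ay unfolding strings_iff by auto
  ultimately have "y @ [Suc b, k - 1] \<in> asym_bracelets k n"
    using asym_bracelet_Suc_second_last[of y b k n] A ay c by simp
  then show False using nL last_non_max_eq[of b k y 1] ay b by simp
qed

lemma blocked_one_shape: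
  assumes n: "n \<ge> 3" and k: "k \<ge> 3" and A: "\<alpha> \<in> asym_bracelets k n" and nr: "\<alpha> \<noteq> root_string n k"
    and a: "\<alpha> = replicate z 0 @ Suc 0 # s" and last: "last \<alpha> = k - 1"
    and nL: "\<not> in_set_opt (asym_bracelets k n) (last_non_max k \<alpha>)"
    and nS: "last_symbol k \<alpha> \<notin> asym_bracelets k n"
  obtains w where "k = 3" "\<alpha> = replicate z 0 @ w @ [1, 2]" "w \<noteq> []" "hd w = 1" "z \<noteq> 0"
    "rev (replicate z 0 @ w) = replicate z 0 @ w"
proof -
  obtain v t where a2: "\<alpha> = replicate z 0 @ v @ replicate t 0 @ [k - 1]"
    and v: "v \<noteq> []" "hd v = 1" "last v \<noteq> 0" and nlt: "\<not> v < rev v"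
    using blocked_decomposition[OF A _ a _ last nS] k by auto
  have len: "length \<alpha> = n" using asym_bracelets_strings[OF A] unfolding strings_iff by simp
  note no_lnm = last_non_max_blocked[OF n A nL]
  have t0: "t = 0"
  proof (rule ccontr)
    assume "t \<noteq> 0"
    then obtain t' where "t = Suc t'" by (cases t) auto
    then have "\<alpha> = (replicate z 0 @ v @ replicate t' 0) @ [0, k - 1]"
      using a2 by (simp add: replicate_append_same[symmetric])
    moreover have "Suc 0 < k - 1" using k by simp
    ultimately show False using no_lnm[of "replicate z 0 @ v @ replicate t' 0" 0] k by simp
  qed
  obtain w b where vw: "v = w @ [b]" using v(1) by (cases v rule: rev_cases) auto
  let ?y = "replicate z 0 @ w"
  have ay: "\<alpha> = ?y @ [b, k - 1]" using a2 t0 vw by simp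
  have b1: "b = 1"
  proof (rule ccontr)
    assume "b \<noteq> 1"
    then have "hd v < hd (rev v)" using v vw by simp
    then show False using nlt hd_less_imp_less[of v "rev v"] v(1) by simp
  qed
  have "\<alpha> < rev_rot_at (length ?y) \<alpha>" using asym_bracelet_less_rev_rot_at[OF A] ay by simp
  then have "?y @ [b, k - 1] < rev ?y @ [k - 1, b]" using ay by (simp add: rev_rot_at_def)
  then have "?y \<le> rev ?y" using append_less_appendD by (metis length_rev)
  moreover have "\<not> (?y < rev ?y \<or> Suc b < k - 1)" using no_lnm[OF ay] b1 k by simp
  ultimately have pal: "rev ?y = ?y" and k3: "k = 3" using b1 k by (auto simp: order_le_less)
  have z0: "z \<noteq> 0"
  proof
    assume "z = 0"
    then have av: "\<alpha> = v @ [k - 1]" using a2 t0 by simp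
    have "\<alpha> < rev_rot_at (length v) \<alpha>" using asym_bracelet_less_rev_rot_at[OF A] av by simp
    then have "v @ [k - 1] < rev v @ [k - 1]" using av by (simp add: rev_rot_at_def)
    then show False using nlt append_less_append_iff[of v "rev v"] by simp
  qed
  have w: "w \<noteq> []"
  proof
    assume "w = []"
    then have "\<alpha> = replicate (n - 2) 0 @ [1, 2]" using ay b1 k3 len by simp
    then show False using nr k3 by (simp add: root_string_def)
  qed
  have "hd w = 1" using v(2) vw w by simp
  then show thesis using that k3 ay b1 w z0 pal by simp
qed

lemma palindrome_zero_block_split:
  fixes y w :: "nat list"
  assumes pal: "rev y = y" and y: "y = replicate z 0 @ w" and w: "w \<noteq> []" "hd w = 1" and z: "z \<noteq> 0"
  obtains y1 d where "y = y1 @ [d, 0]" "y1 \<noteq> []" "hd y1 = 0" "d < 2" "z \<le> length y1"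
proof -
  have hy: "hd y = 0" using y z by (cases z) simp_all
  have ne: "y \<noteq> []" using y w by simp
  have "last y = 0" using pal hy by (metis hd_rev)
  then obtain y' where y': "y = y' @ [0]" using ne by (cases y rule: rev_cases) auto
  have yz: "y ! z = 1" using y w by (simp add: nth_append hd_conv_nth)
  have ly: "length y \<ge> 3"
  proof (rule ccontr)
    assume "\<not> length y \<ge> 3"
    moreover have "length y = z + length w" "length w \<noteq> 0" using y w by simp_all
    ultimately have "z = 1" "length w = 1" using z by linarith+
    then obtain x where "w = [x]" by (metis One_nat_def length_0_conv length_Suc_conv)
    then have "y = [0, 1]" using y w \<open>z = 1\<close> by simp
    then show False using pal by simp
  qed
  then obtain y1 d where yd: "y' = y1 @ [d]" using y' by (cases y' rule: rev_cases) auto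
  have y1: "y1 \<noteq> []" using ly y' yd by auto
  have "d = y ! (length y - 2)" using y' yd by (simp add: nth_append)
  also have "\<dots> = rev y ! (length y - 2)" using pal by simp
  also have "\<dots> = y ! 1" using ly by (simp add: rev_nth)
  finally have "d < 2" using y w z by (cases z) (auto simp: nth_append hd_conv_nth)
  moreover have "hd y1 = 0" using hy y' yd y1 by simp
  moreover have "z \<le> length y1"
  proof -
    have "z < length y" using y w by simp
    moreover have "y ! (length y - 1) = 0" using y' by (simp add: nth_append)
    ultimately have "z \<noteq> length y - 1" using yz by auto
    then have "z < length y - 1" using \<open>z < length y\<close> by linarith
    then show ?thesis using y' yd by simp
  qed
  ultimately show thesis using that y' yd y1 by simp
qed

lemma par_progress_first_one:
  assumes n: "n \<ge> 3" and k: "k \<ge> 3" and A: "\<alpha> \<in> asym_bracelets k n" and nr: "\<alpha> \<noteq> root_string n k"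
    and a: "\<alpha> = replicate z 0 @ Suc 0 # s" and last: "last \<alpha> = k - 1"
    and nL: "\<not> in_set_opt (asym_bracelets k n) (last_non_max k \<alpha>)"
    and nS: "last_symbol k \<alpha> \<notin> asym_bracelets k n"
  shows "par k n \<alpha> \<in> asym_bracelets k n \<and> par_less k \<alpha> (par k n \<alpha>)"
proof -
  obtain w where k3: "k = 3" and aw: "\<alpha> = replicate z 0 @ w @ [1, 2]" and w: "w \<noteq> []" "hd w = 1"
    and z: "z \<noteq> 0" and pal: "rev (replicate z 0 @ w) = replicate z 0 @ w"
    using blocked_one_shape[OF n k A nr a last nL nS] by blast
  obtain y1 d where yd: "replicate z 0 @ w = y1 @ [d, 0]" and y1: "y1 \<noteq> []" "hd y1 = 0"
    and d: "d < 2" and zy: "z \<le> length y1"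
    using palindrome_zero_block_split[OF pal refl w z] by blast
  have a5: "\<alpha> = y1 @ [d, 0, 1, 2]" using aw yd by simp
  have SL: "second_last_non_max k \<alpha> = Some (y1 @ [d, 1, 1, 2])"
    using second_last_non_max_eq[of 0 3 1 "y1 @ [d]" 1] a5 k3 by simp
  have SLA: "y1 @ [d, 1, 1, 2] \<in> asym_bracelets k n"
    using asym_bracelet_ternary_0112[of y1 d n] A a5 d y1 k3 by simp
  show ?thesis
  proof (cases "in_set_opt (asym_bracelets k n) (first_non_min \<alpha>)")
    case True
    have F: "first_non_min \<alpha> = Some (replicate z 0 @ 0 # s)" using first_non_min_eq[of "Suc 0"] a by simp
    then have "replicate z 0 @ 0 # s \<in> asym_bracelets k n" using True by simp
    then show ?thesis using par_eq_first_non_min[OF nL nS F] par_less_first_non_min_one[of k z s] a by simp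
  next
    case False
    let ?p = "Suc (length y1)"
    have p: "\<alpha> ! ?p = 0" "\<alpha>[?p := Suc (\<alpha> ! ?p)] = y1 @ [d, 1, 1, 2]"
      using a5 by (simp_all add: nth_append list_update_append)
    have "z < ?p" "?p < length \<alpha>" "\<alpha> ! ?p \<noteq> k - 1" using zy a5 k3 p(1) by simp_all
    then have "par_less k \<alpha> (\<alpha>[?p := Suc (\<alpha> ! ?p)])"
      using par_less_Suc_after_first_nonzero[OF a] by simp
    then show ?thesis using par_eq_second_last_non_max[OF nL nS False SL SLA] SLA p(2) by simp
  qed
qed

lemma par_progress:
  assumes n: "n \<ge> 3" and k: "k \<ge> 3" and A: "\<alpha> \<in> asym_bracelets k n"
    and nr: "\<alpha> \<noteq> root_string n k"
  shows "par k n \<alpha> \<in> asym_bracelets k n \<and> par_less k \<alpha> (par k n \<alpha>)"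
proof -
  obtain z h s where a: "\<alpha> = replicate z 0 @ h # s" and h: "h \<noteq> 0"
    using asym_bracelet_first_nonzero[OF A] by blast
  have "\<alpha> \<noteq> []" using a by simp
  then have ab: "\<alpha> = butlast \<alpha> @ [last \<alpha>]" and lk: "last \<alpha> < k"
    using asym_bracelets_strings[OF A] unfolding strings_iff by auto
  show ?thesis
  proof (cases "last \<alpha> = k - 1")
    case False
    then have "last_non_max k \<alpha> = Some (butlast \<alpha> @ [Suc (last \<alpha>)])"
      using last_non_max_eq[of "last \<alpha>" k "butlast \<alpha>" 0] ab by simp
    moreover have "butlast \<alpha> @ [Suc (last \<alpha>)] \<in> asym_bracelets k n"
      using asym_bracelet_Suc_last[of "butlast \<alpha>" "last \<alpha>" k n] A ab lk False by simp
    ultimately show ?thesis using par_progress_last_non_max[OF A k] by blast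
  next
    case last: True
    show ?thesis
    proof (cases "in_set_opt (asym_bracelets k n) (last_non_max k \<alpha>)")
      case True
      then obtain \<beta> where "last_non_max k \<alpha> = Some \<beta>" "\<beta> \<in> asym_bracelets k n"
        by (cases "last_non_max k \<alpha>") auto
      then show ?thesis using par_progress_last_non_max[OF A k] by blast
    next
      case nL: False
      consider "last_symbol k \<alpha> \<in> asym_bracelets k n" | "last_symbol k \<alpha> \<notin> asym_bracelets k n" "h \<ge> 2"
        | "last_symbol k \<alpha> \<notin> asym_bracelets k n" "h = Suc 0"
        using h by linarith
      then show ?thesis
      proof cases
        case 1 then show ?thesis using par_progress_last_symbol[OF a h last k nL] by blast
      next
        case 2 then show ?thesis using par_progress_first_non_min[OF n k A nr a _ last nL] by blast
      next
        case 3 then show ?thesis using par_progress_first_one[OF n k A nr _ last nL] a by blast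
      qed
    qed
  qed
qed

lemma par_in_candidates:
  assumes "par k n \<alpha> \<noteq> \<alpha>"
  shows "\<exists>b. Some b \<in> set (par_candidates k \<alpha>) \<and> b \<in> asym_bracelets k n \<and> par k n \<alpha> = b"
proof -
  let ?P = "in_set_opt (asym_bracelets k n)" and ?L = "par_candidates k \<alpha>"
  obtain oo where f: "find ?P ?L = Some oo"
  proof (cases "find ?P ?L")
    case None
    then have "par k n \<alpha> = \<alpha>" unfolding par_def by simp
    then show ?thesis using assms by simp
  next
    case (Some oo) then show ?thesis using that by blast
  qed
  then obtain i where i: "i < length ?L" "oo = ?L ! i" "?P oo" unfolding find_Some_iff by blast
  from i(3) obtain b where ob: "oo = Some b" by (cases oo) simp_all
  have "Some b \<in> set ?L" using i ob by (metis nth_mem)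
  moreover have "b \<in> asym_bracelets k n" using i(3) unfolding ob by simp
  moreover have "par k n \<alpha> = b" using f ob unfolding par_def by simp
  ultimately show ?thesis by blast
qed

lemma candidate_rotations_differ:
  assumes s: "\<alpha> \<in> strings k n" and k: "k \<ge> 2" and ne: "\<alpha> \<noteq> []"
    and c: "Some b \<in> set (par_candidates k \<alpha>)"
  shows "\<exists>\<beta> \<in> rotations \<alpha>. \<exists>\<gamma> \<in> rotations b. hd \<beta> \<noteq> hd \<gamma> \<and> tl \<beta> = tl \<gamma>"
proof -
  have lt: "\<forall>x\<in>set \<alpha>. x < k" using s unfolding strings_iff by simp
  consider "last_non_max k \<alpha> = Some b" | "b = last_symbol k \<alpha>" | "first_non_min \<alpha> = Some b"
    | "second_last_non_max k \<alpha> = Some b"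
    using c unfolding par_candidates_def by auto
  then show ?thesis
  proof cases
    case 1
    then obtain p where p: "p < length \<alpha>" "b = \<alpha>[p := Suc (\<alpha> ! p)]" using last_non_max_SomeD by blast
    show ?thesis using rotations_differ_at_one_position[OF p(1), of "Suc (\<alpha> ! p)" b] p by simp
  next
    case 2
    let ?x = "(last \<alpha> + 1) mod k"
    have pl: "length \<alpha> - 1 < length \<alpha>" using ne by simp
    have la: "\<alpha> ! (length \<alpha> - 1) = last \<alpha>" using ne by (simp add: last_conv_nth)
    have lk: "last \<alpha> < k" using lt ne by simp
    have "?x \<noteq> last \<alpha>"
    proof (cases "last \<alpha> + 1 < k")
      case True then show ?thesis by simp
    next
      case False then have "last \<alpha> + 1 = k" using lk by simp
      then show ?thesis using k by simp
    qed
    then show ?thesis using rotations_differ_at_one_position[OF pl, of ?x b] la rotations_last_symbol[OF ne, of k] 2 by simp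
  next
    case 3
    then obtain p where p: "p < length \<alpha>" "\<alpha> ! p \<noteq> 0" "b = \<alpha>[p := \<alpha> ! p - 1]" using first_non_min_SomeD by blast
    have "\<alpha> ! p - 1 \<noteq> \<alpha> ! p" using p(2) by simp
    then show ?thesis using rotations_differ_at_one_position[OF p(1), of "\<alpha> ! p - 1" b] p by simp
  next
    case 4
    then obtain p where p: "p < length \<alpha>" "b = \<alpha>[p := Suc (\<alpha> ! p)]" using second_last_non_max_SomeD by blast
    show ?thesis using rotations_differ_at_one_position[OF p(1), of "Suc (\<alpha> ! p)" b] p by simp
  qed
qed

lemma finite_asym_bracelets: "finite (asym_bracelets k n)"
proof -
  have "asym_bracelets k n \<subseteq> {xs. set xs \<subseteq> {..<k} \<and> length xs = n}"
    unfolding asym_bracelets_def strings_def by auto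
  moreover have "finite {xs. set xs \<subseteq> {..<k} \<and> length xs = n}"
    by (rule finite_lists_length_eq) simp
  ultimately show ?thesis by (rule finite_subset)
qed

lemma par_iterate_reaches_root:
  assumes n: "n \<ge> 3" and k: "k \<ge> 3"
  shows "\<alpha> \<in> asym_bracelets k n \<Longrightarrow> \<exists>t. (par k n ^^ t) \<alpha> = root_string n k"
proof (induction \<alpha> rule: measure_induct_rule[where f = "\<lambda>\<alpha>. card {\<beta> \<in> asym_bracelets k n. par_less k \<alpha> \<beta>}"])
  case (less \<alpha>)
  show ?case
  proof (cases "\<alpha> = root_string n k")
    case True then show ?thesis by (intro exI[of _ 0]) simp
  next
    case False
    let ?p = "par k n \<alpha>"
    have kp: "?p \<in> asym_bracelets k n" "par_less k \<alpha> ?p" using par_progress[OF n k less.prems False] by auto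
    have sub: "{\<beta> \<in> asym_bracelets k n. par_less k ?p \<beta>} \<subset> {\<beta> \<in> asym_bracelets k n. par_less k \<alpha> \<beta>}"
    proof
      show "{\<beta> \<in> asym_bracelets k n. par_less k ?p \<beta>} \<subseteq> {\<beta> \<in> asym_bracelets k n. par_less k \<alpha> \<beta>}"
        using kp(2) par_less_trans by blast
      have "?p \<in> {\<beta> \<in> asym_bracelets k n. par_less k \<alpha> \<beta>}" using kp by simp
      moreover have "?p \<notin> {\<beta> \<in> asym_bracelets k n. par_less k ?p \<beta>}" using par_less_irrefl by simp
      ultimately show "{\<beta> \<in> asym_bracelets k n. par_less k ?p \<beta>} \<noteq> {\<beta> \<in> asym_bracelets k n. par_less k \<alpha> \<beta>}"
        by blast
    qed
    have fin: "finite {\<beta> \<in> asym_bracelets k n. par_less k \<alpha> \<beta>}" using finite_asym_bracelets by simp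
    have "card {\<beta> \<in> asym_bracelets k n. par_less k ?p \<beta>} < card {\<beta> \<in> asym_bracelets k n. par_less k \<alpha> \<beta>}"
      using psubset_card_mono[OF fin sub] .
    then obtain t where t: "(par k n ^^ t) ?p = root_string n k" using less.IH kp(1) by blast
    have "(par k n ^^ Suc t) \<alpha> = (par k n ^^ t) ?p" by (simp only: funpow_Suc_right comp_apply)
    then show ?thesis using t by metis
  qed
qed

theorem mainTheorem9:
  fixes n k :: nat
  assumes "n \<ge> 3" and "k \<ge> 3"
  shows "root_string n k \<in> asym_bracelets k n
    \<and> (\<forall>\<alpha> \<in> asym_bracelets k n - {root_string n k}.
          (\<exists>c \<in> set (par_candidates k \<alpha>). in_set_opt (asym_bracelets k n) c)
        \<and> par k n \<alpha> \<in> asym_bracelets k n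
        \<and> (\<exists>\<beta> \<in> rotations \<alpha>. \<exists>\<gamma> \<in> rotations (par k n \<alpha>).
              hd \<beta> \<noteq> hd \<gamma> \<and> tl \<beta> = tl \<gamma>))
    \<and> (\<forall>\<alpha> \<in> asym_bracelets k n. \<exists>t. (par k n ^^ t) \<alpha> = root_string n k)"
proof (intro conjI ballI)
  show "root_string n k \<in> asym_bracelets k n" using root_string_asym_bracelet assms by simp
next
  fix \<alpha> assume "\<alpha> \<in> asym_bracelets k n" then show "\<exists>t. (par k n ^^ t) \<alpha> = root_string n k"
    using par_iterate_reaches_root assms by blast
next
  fix \<alpha> assume a: "\<alpha> \<in> asym_bracelets k n - {root_string n k}"
  then have A: "\<alpha> \<in> asym_bracelets k n" and nr: "\<alpha> \<noteq> root_string n k" by auto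
  have kp: "par k n \<alpha> \<in> asym_bracelets k n" "par_less k \<alpha> (par k n \<alpha>)" using par_progress[OF assms A nr] by auto
  have "par k n \<alpha> \<noteq> \<alpha>" using kp(2) par_less_irrefl by metis
  then obtain b where b: "Some b \<in> set (par_candidates k \<alpha>)" "b \<in> asym_bracelets k n" "par k n \<alpha> = b"
    using par_in_candidates by blast
  show "\<exists>c \<in> set (par_candidates k \<alpha>). in_set_opt (asym_bracelets k n) c" using b by force
  show "par k n \<alpha> \<in> asym_bracelets k n" by (rule kp(1))
  have s: "\<alpha> \<in> strings k n" using A asym_bracelets_strings by blast
  have ne: "\<alpha> \<noteq> []" using s assms unfolding strings_iff by auto
  show "\<exists>\<beta> \<in> rotations \<alpha>. \<exists>\<gamma> \<in> rotations (par k n \<alpha>). hd \<beta> \<noteq> hd \<gamma> \<and> tl \<beta> = tl \<gamma>"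
    using candidate_rotations_differ[OF s _ ne b(1)] b(3) assms by simp
qed

end
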